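(* Let $\mathcal{O}$ be an order (not necessarily maximal) in a definite quaternion algebra $A$ over $\mathbb{Q}$, and fix a weak fundamental domain $\mathcal{F}$ for the action of $\mathrm{SL}_2(\mathcal{O})$ on $\mathbb{H}^5_\mathbb{R}$. Then for every $\Delta\in\mathbb{Z}\setminus\{0\}$, the number of reduced elements of $\mathcal{Q}(\mathcal{O},\Delta)$ is finite.
   Context: $\mathbb{H}$ is Hamilton's real quaternion algebra with conjugation $\overline{x}$, reduced norm $\mathrm{n}(x)=x\overline{x}$, trace $\mathrm{tr}(x)=x+\overline{x}$, and Euclidean norm $\|z\|=\mathrm{n}(z)^{1/2}$. $A$ is a quaternion algebra over $\mathbb{Q}$ with $A\otimes_\mathbb{Q}\mathbb{R}\cong\mathbb{H}$, viewed inside $\mathbb{H}$; an order is a unitary subring which is a finitely generated $\mathbb{Z}$-module spanning $A$ over $\mathbb{Q}$. $\mathrm{SL}_2(\mathcal{O})$ consists of $2\times2$ matrices over $\mathcal{O}$ of Dieudonné determinant $1$ ($\mathrm{Det}\begin{pmatrix}\alpha&\beta\\ \gamma&\delta\end{pmatrix}^2=\mathrm{n}(\alpha\delta)+\mathrm{n}(\beta\gamma)-\mathrm{tr}(\alpha\overline{\gamma}\delta\overline{\beta})$). $\mathbb{H}^5_\mathbb{R}=\mathbb{H}\times\,]0,+\infty[$ with metric $(ds^2_\mathbb{H}+dr^2)/r^2$ and boundary $\mathbb{H}\cup\{\infty\}$, with isometric action $\begin{pmatrix}\alpha&\beta\\ \gamma&\delta\end{pmatrix}\cdot(z,r)=\Big(\frac{(\alpha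 z+\beta)\overline{(\gamma z+\delta)}+\alpha\overline{\gamma}r^2}{\mathrm{n}(\gamma z+\delta)+r^2\mathrm{n}(\gamma)},\frac{r}{\mathrm{n}(\gamma z+\delta)+r^2\mathrm{n}(\gamma)}\Big)$. A parabolic fixed point of a group $\Gamma$ of isometries is a boundary point fixed by a parabolic element of $\Gamma$. A weak fundamental domain for $\Gamma=\mathrm{SL}_2(\mathcal{O})$ is a subset $\mathcal{F}\subset\mathbb{H}^5_\mathbb{R}$ such that (i) $\bigcup_{g\in\Gamma}g\mathcal{F}=\mathbb{H}^5_\mathbb{R}$; (ii) there is a compact $K\subset\mathbb{H}$ with $\mathcal{F}\subset K\times\,]0,+\infty[$; (iii) there exist $\kappa,\epsilon>0$ and a finite set $Z$ of parabolic fixed points of $\Gamma$ such that $\mathcal{F}=\{(z,r)\in\mathcal{F}:r\ge\epsilon\}\cup\bigcup_{s\in Z}\mathcal{E}_s$ with $\mathcal{E}_s\subset\{(z,r)\in\mathcal{F}:\|z-s\|\le\kappa r^2\}$. A binary Hamiltonian form is $f(u,v)=a\,\mathrm{n}(u)+\mathrm{tr}(\overline{u}\,b\,v)+c\,\mathrm{n}(v)$ with $a,c\in\mathbb{R}$, $b\in\mathbb{H}$; it is integral over $\mathcal{O}$ if $a,c\in\mathbb{Z}$, $b\in\mathcal{O}$; its discriminant is $\Delta(f)=\mathrm{n}(b)-ac$. $\mathcal{Q}(\mathcal{O},\Delta)$ is the set of forms integral over $\mathcal{O}$ with discriminant $\Delta$. $f$ is positive definite iff $a>0$ and $\Delta(f)<0$,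 and indefinite iff $\Delta(f)>0$. A positive definite integral form $f$ is reduced if $\big(-\frac{b}{a},\frac{\sqrt{-\Delta(f)}}{a}\big)\in\mathcal{F}$; a negative definite form $f$ is reduced if $-f$ is; an indefinite integral form is reduced if $\mathcal{C}(f)=\{(z,r)\in\mathbb{H}\times\,]0,+\infty[\,:f(z,1)+ar^2=0\}$ meets $\mathcal{F}$. *)

theory Defs
  imports "HOL-Analysis.Analysis"
begin

datatype quat = Quat (qre: real) (qi: real) (qj: real) (qk: real)

instantiation quat :: "{zero, one, plus, minus, uminus, times, scaleR}"
begin
definition "0 = Quat 0 0 0 0"
definition "1 = Quat 1 0 0 0"
definition "p + q = Quat (qre p + qre q) (qi p + qi q) (qj p + qj q) (qk p + qk q)"
definition "p - q = Quat (qre p - qre q) (qi p - qi q) (qj p - qj q) (qk p - qk q)"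
definition "- q = Quat (- qre q) (- qi q) (- qj q) (- qk q)"
definition "p * q = Quat
   (qre p * qre q - qi p * qi q - qj p * qj q - qk p * qk q)
   (qre p * qi q + qi p * qre q + qj p * qk q - qk p * qj q)
   (qre p * qj q - qi p * qk q + qj p * qre q + qk p * qi q)
   (qre p * qk q + qi p * qj q - qj p * qi q + qk p * qre q)"
definition "scaleR r q = Quat (r * qre q) (r * qi q) (r * qj q) (r * qk q)"
instance ..
end

lemma quat_eqI: "qre p = qre q \<Longrightarrow> qi p = qi q \<Longrightarrow> qj p = qj q \<Longrightarrow> qk p = qk q \<Longrightarrow> p = q"
  by (cases p; cases q) simp

instance quat :: ab_group_add
  by standard (auto intro!: quat_eqI simp: plus_quat_def minus_quat_def uminus_quat_def zero_quat_def)

definition qcnj :: "quat \<Rightarrow> quat" where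
  "qcnj q = Quat (qre q) (- qi q) (- qj q) (- qk q)"

definition qn :: "quat \<Rightarrow> real" where
  "qn q = (qre q)\<^sup>2 + (qi q)\<^sup>2 + (qj q)\<^sup>2 + (qk q)\<^sup>2"

definition qtr :: "quat \<Rightarrow> real" where
  "qtr q = 2 * qre q"

definition qnorm :: "quat \<Rightarrow> real" where
  "qnorm q = sqrt (qn q)"

text \<open>embedding of the reals and multiplicative inverse (inverse of 0 is 0)\<close>
definition qof_real :: "real \<Rightarrow> quat" where
  "qof_real r = Quat r 0 0 0"

definition qinv :: "quat \<Rightarrow> quat" where
  "qinv q = (1 / qn q) *\<^sub>R qcnj q"

text \<open>the (Euclidean) topology of H is that of R^4\<close>
definition quat_vec :: "quat \<Rightarrow> real^4" where
  "quat_vec q = vector [qre q, qi q, qj q, qk q]"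

definition qcompact :: "quat set \<Rightarrow> bool" where
  "qcompact K \<longleftrightarrow> compact (quat_vec ` K)"

text \<open>A: a Q-subalgebra of H (containing 1, closed under + and *) with a Q-basis
  e 0, ..., e 3 which is an R-basis of H (i.e. A tensor R = H).\<close>
definition real_lin_indep4 :: "(nat \<Rightarrow> quat) \<Rightarrow> bool" where
  "real_lin_indep4 e \<longleftrightarrow>
     (\<forall>c :: nat \<Rightarrow> real. (\<Sum>i<4. c i *\<^sub>R e i) = 0 \<longrightarrow> (\<forall>i<4. c i = 0))"

definition definite_quat_algebra_Q :: "quat set \<Rightarrow> bool" where
  "definite_quat_algebra_Q A \<longleftrightarrow>
     1 \<in> A \<and> (\<forall>x\<in>A. \<forall>y\<in>A. x + y \<in> A \<and> x * y \<in> A) \<and>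
     (\<exists>e :: nat \<Rightarrow> quat. (\<forall>i<4. e i \<in> A) \<and> real_lin_indep4 e \<and>
        A = {(\<Sum>i<4. of_rat (c i) *\<^sub>R e i) | c :: nat \<Rightarrow> rat. True})"

definition quat_order :: "quat set \<Rightarrow> quat set \<Rightarrow> bool" where
  "quat_order A \<O> \<longleftrightarrow>
     1 \<in> \<O> \<and> (\<forall>x\<in>\<O>. \<forall>y\<in>\<O>. x + y \<in> \<O> \<and> x - y \<in> \<O> \<and> x * y \<in> \<O>) \<and>
     (\<exists>S. finite S \<and> S \<subseteq> \<O> \<and>
        \<O> = {(\<Sum>s\<in>S. of_int (k s) *\<^sub>R s) | k :: quat \<Rightarrow> int. True} \<and>
        A = {(\<Sum>s\<in>S. of_rat (c s) *\<^sub>R s) | c :: quat \<Rightarrow> rat. True})"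

text \<open>A 2x2 matrix (alpha, beta; gamma, delta) is represented by the tuple (alpha, beta, gamma, delta).\<close>
type_synonym qmat = "quat \<times> quat \<times> quat \<times> quat"

definition dieudonne_det_sq :: "qmat \<Rightarrow> real" where
  "dieudonne_det_sq g = (case g of (\<alpha>, \<beta>, \<gamma>, \<delta>) \<Rightarrow>
     qn (\<alpha> * \<delta>) + qn (\<beta> * \<gamma>) - qtr (\<alpha> * qcnj \<gamma> * \<delta> * qcnj \<beta>))"

text \<open>Dieudonne determinant is nonnegative, so Det = 1 iff Det^2 = 1.\<close>
definition SL2 :: "quat set \<Rightarrow> qmat set" where
  "SL2 \<O> = {(\<alpha>, \<beta>, \<gamma>, \<delta>). \<alpha> \<in> \<O> \<and> \<beta> \<in> \<O> \<and> \<gamma> \<in> \<O> \<and> \<delta> \<in> \<O> \<and>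
                            dieudonne_det_sq (\<alpha>, \<beta>, \<gamma>, \<delta>) = 1}"

text \<open>points (z, r) of H^5 = H x ]0, +oo[\<close>
definition H5 :: "(quat \<times> real) set" where
  "H5 = {p. snd p > 0}"

definition hyp_act :: "qmat \<Rightarrow> quat \<times> real \<Rightarrow> quat \<times> real" where
  "hyp_act g p = (case g of (\<alpha>, \<beta>, \<gamma>, \<delta>) \<Rightarrow> case p of (z, r) \<Rightarrow>
     (let D = qn (\<gamma> * z + \<delta>) + r\<^sup>2 * qn \<gamma> in
      ((1 / D) *\<^sub>R ((\<alpha> * z + \<beta>) * qcnj (\<gamma> * z + \<delta>) + r\<^sup>2 *\<^sub>R (\<alpha> * qcnj \<gamma>)), r / D)))"

text \<open>boundary H \<union> {\<infinity>}: Some z is z \<in> H, None is \<infinity>; induced action by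
  z \<mapsto> (\<alpha> z + \<beta>)(\<gamma> z + \<delta>)\<inverse>.\<close>
definition bdry_act :: "qmat \<Rightarrow> quat option \<Rightarrow> quat option" where
  "bdry_act g x = (case g of (\<alpha>, \<beta>, \<gamma>, \<delta>) \<Rightarrow> case x of
       Some z \<Rightarrow> (if \<gamma> * z + \<delta> = 0 then None else Some ((\<alpha> * z + \<beta>) * qinv (\<gamma> * z + \<delta>)))
     | None \<Rightarrow> (if \<gamma> = 0 then None else Some (\<alpha> * qinv \<gamma>)))"

definition parabolic :: "qmat \<Rightarrow> bool" where
  "parabolic g \<longleftrightarrow> (\<forall>p\<in>H5. hyp_act g p \<noteq> p) \<and> (\<exists>!x. bdry_act g x = x)"

definition parabolic_fixed_point :: "qmat set \<Rightarrow> quat option \<Rightarrow> bool" where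
  "parabolic_fixed_point \<Gamma> x \<longleftrightarrow> (\<exists>g\<in>\<Gamma>. parabolic g \<and> bdry_act g x = x)"

definition weak_fundamental_domain :: "qmat set \<Rightarrow> (quat \<times> real) set \<Rightarrow> bool" where
  "weak_fundamental_domain \<Gamma> F \<longleftrightarrow>
     F \<subseteq> H5 \<and>
     (\<Union>g\<in>\<Gamma>. hyp_act g ` F) = H5 \<and>
     (\<exists>K. qcompact K \<and> F \<subseteq> K \<times> {0<..}) \<and>
     (\<exists>\<kappa> \<epsilon> Z E. \<kappa> > 0 \<and> \<epsilon> > 0 \<and> finite Z \<and>
        (\<forall>s\<in>Z. parabolic_fixed_point \<Gamma> (Some s)) \<and>
        F = {(z, r) \<in> F. r \<ge> \<epsilon>} \<union> (\<Union>s\<in>Z. E s) \<and>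
        (\<forall>s\<in>Z. E s \<subseteq> {(z, r) \<in> F. qnorm (z - s) \<le> \<kappa> * r\<^sup>2}))"

text \<open>f(u,v) = a n(u) + tr(conj(u) b v) + c n(v) is represented by (a, b, c).
  Integral forms over \<O>: a, c integers, b in \<O>.\<close>
definition form_disc :: "real \<times> quat \<times> real \<Rightarrow> real" where
  "form_disc f = (case f of (a, b, c) \<Rightarrow> qn b - a * c)"

definition form_eval :: "real \<times> quat \<times> real \<Rightarrow> quat \<Rightarrow> quat \<Rightarrow> real" where
  "form_eval f u v = (case f of (a, b, c) \<Rightarrow> a * qn u + qtr (qcnj u * b * v) + c * qn v)"

definition Qforms :: "quat set \<Rightarrow> int \<Rightarrow> (int \<times> quat \<times> int) set" where
  "Qforms \<O> \<Delta> = {(a, b, c). b \<in> \<O> \<and> form_disc (real_of_int a, b, real_of_int c) = real_of_int \<Delta>}"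

definition pos_def_reduced :: "(quat \<times> real) set \<Rightarrow> real \<times> quat \<times> real \<Rightarrow> bool" where
  "pos_def_reduced F f = (case f of (a, b, c) \<Rightarrow>
     ((- 1 / a) *\<^sub>R b, sqrt (- form_disc f) / a) \<in> F)"

definition form_C :: "real \<times> quat \<times> real \<Rightarrow> (quat \<times> real) set" where
  "form_C f = (case f of (a, b, c) \<Rightarrow> {(z, r). r > 0 \<and> form_eval f z 1 + a * r\<^sup>2 = 0})"

definition reduced_form :: "(quat \<times> real) set \<Rightarrow> int \<times> quat \<times> int \<Rightarrow> bool" where
  "reduced_form F f = (case f of (a, b, c) \<Rightarrow>
     let f' = (real_of_int a, b, real_of_int c) in
     (a > 0 \<and> form_disc f' < 0 \<and> pos_def_reduced F f') \<or>
     (a < 0 \<and> form_disc f' < 0 \<and> pos_def_reduced F (- real_of_int a, - b, - real_of_int c)) \<or>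
     (form_disc f' > 0 \<and> form_C f' \<inter> F \<noteq> {}))"

end

theory Submission
  imports Defs
begin

text \<open>A reduced form \<open>f = (a, b, c)\<close> with \<open>a \<noteq> 0\<close> yields a point \<open>(z, r)\<close> of \<open>F\<close> with
  \<open>n(z + b/a) + r\<^sup>2 = \<bar>\<Delta>\<bar>/a\<^sup>2\<close> (and \<open>z = -b/a\<close> if \<open>f\<close> is definite). If \<open>r \<ge> \<epsilon>\<close> this bounds
  \<open>\<bar>a\<bar>\<close> by \<open>sqrt \<bar>\<Delta>\<bar> / \<epsilon>\<close>. Otherwise \<open>(z, r)\<close> lies in the cusp neighbourhood of a parabolic
  fixed point \<open>s\<close>. Such points lie in \<open>A\<close>: the unique fixed point of a parabolic element of
  \<open>SL\<^sub>2(\<O>)\<close> is obtained from its entries by the field operations. Hence \<open>f(s, 1)\<close> has a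
  denominator bounded independently of \<open>f\<close>, while near the cusp \<open>\<bar>f(s, 1)\<bar> = O(1/\<bar>a\<bar>)\<close>; so
  \<open>\<bar>a\<bar>\<close> is bounded unless \<open>f(s, 1) = 0\<close>, which in turn forces \<open>\<bar>a\<bar> \<le> 3 \<kappa> sqrt \<bar>\<Delta>\<bar>\<close>.
  As \<open>z\<close> stays in a compact set, \<open>n(b)\<close> and \<open>c\<close> are then bounded too, and since \<open>\<O>\<close> is a
  lattice in \<open>A \<otimes> \<real> = \<bbbH>\<close> only finitely many forms remain.\<close>

lemma quat_eq_iff: "p = q \<longleftrightarrow> qre p = qre q \<and> qi p = qi q \<and> qj p = qj q \<and> qk p = qk q"
  by (auto intro: quat_eqI)

lemma quat_component_simps [simp]:
  "qre 0 = 0" "qi 0 = 0" "qj 0 = 0" "qk 0 = 0"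
  "qre 1 = 1" "qi 1 = 0" "qj 1 = 0" "qk 1 = 0"
  "qre (p + q) = qre p + qre q" "qi (p + q) = qi p + qi q" "qj (p + q) = qj p + qj q" "qk (p + q) = qk p + qk q"
  "qre (p - q) = qre p - qre q" "qi (p - q) = qi p - qi q" "qj (p - q) = qj p - qj q" "qk (p - q) = qk p - qk q"
  "qre (- q) = - qre q" "qi (- q) = - qi q" "qj (- q) = - qj q" "qk (- q) = - qk q"
  "qre (r *\<^sub>R q) = r * qre q" "qi (r *\<^sub>R q) = r * qi q" "qj (r *\<^sub>R q) = r * qj q" "qk (r *\<^sub>R q) = r * qk q"
  "qre (p * q) = qre p * qre q - qi p * qi q - qj p * qj q - qk p * qk q"
  "qi (p * q) = qre p * qi q + qi p * qre q + qj p * qk q - qk p * qj q"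
  "qj (p * q) = qre p * qj q - qi p * qk q + qj p * qre q + qk p * qi q"
  "qk (p * q) = qre p * qk q + qi p * qj q - qj p * qi q + qk p * qre q"
  "qre (qcnj q) = qre q" "qi (qcnj q) = - qi q" "qj (qcnj q) = - qj q" "qk (qcnj q) = - qk q"
  by (simp_all add: zero_quat_def one_quat_def plus_quat_def minus_quat_def uminus_quat_def
      scaleR_quat_def times_quat_def qcnj_def)

instance quat :: real_algebra_1
  by standard (simp_all add: quat_eq_iff algebra_simps)

lemma qre_sum: "qre (sum f S) = (\<Sum>x\<in>S. qre (f x))"
  by (induction S rule: infinite_finite_induct) auto

lemma qn_mult: "qn (p * q) = qn p * qn q"
  by (simp add: qn_def power2_eq_square algebra_simps)

lemma qn_nonneg: "qn q \<ge> 0"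
  by (simp add: qn_def)

lemma qn_eq_0_iff: "qn q = 0 \<longleftrightarrow> q = 0"
  by (auto simp: qn_def quat_eq_iff add_nonneg_eq_0_iff)

lemma qn_pos: "q \<noteq> 0 \<Longrightarrow> qn q > 0"
  using qn_nonneg[of q] qn_eq_0_iff[of q] by linarith

lemma qn_zero [simp]: "qn 0 = 0"
  by (simp add: qn_def)

lemma qn_one [simp]: "qn 1 = 1"
  by (simp add: qn_def)

lemma qn_uminus [simp]: "qn (- q) = qn q"
  by (simp add: qn_def)

lemma qn_scaleR: "qn (r *\<^sub>R q) = r\<^sup>2 * qn q"
  by (simp add: qn_def power2_eq_square algebra_simps)

lemma qn_add: "qn (x + y) = qn x + 2 * qre (qcnj x * y) + qn y"
  by (simp add: qn_def power2_eq_square algebra_simps)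

lemma qn_diff: "qn (x - y) = qn x - 2 * qre (qcnj x * y) + qn y"
  by (simp add: qn_def power2_eq_square algebra_simps)

instance quat :: ring_no_zero_divisors
proof
  fix p q :: quat
  assume "p \<noteq> 0" "q \<noteq> 0"
  then have "qn (p * q) \<noteq> 0"
    by (simp add: qn_mult qn_eq_0_iff)
  then show "p * q \<noteq> 0"
    by (metis qn_eq_0_iff)
qed

lemma qcnj_mult: "qcnj (p * q) = qcnj q * qcnj p"
  by (simp add: quat_eq_iff algebra_simps)

lemma qcnj_uminus: "qcnj (- q) = - qcnj q"
  by (simp add: quat_eq_iff)

lemma qcnj_conv_qre: "qcnj q = (2 * qre q) *\<^sub>R 1 - q"
  by (simp add: quat_eq_iff)

lemma mult_qcnj: "q * qcnj q = qn q *\<^sub>R 1"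
  by (simp add: quat_eq_iff qn_def power2_eq_square algebra_simps)

lemma qcnj_mult_self: "qcnj q * q = qn q *\<^sub>R 1"
  by (simp add: quat_eq_iff qn_def power2_eq_square algebra_simps)

lemma qre_mult_commute: "qre (p * q) = qre (q * p)"
  by (simp add: algebra_simps)

lemma quat_cayley_hamilton: "q * q = (2 * qre q) *\<^sub>R q - qn q *\<^sub>R 1"
  by (simp add: quat_eq_iff qn_def power2_eq_square algebra_simps)

lemma qinv_right: "q \<noteq> 0 \<Longrightarrow> q * qinv q = 1"
  using qn_pos[of q] by (simp add: qinv_def mult_qcnj)

lemma qinv_left: "q \<noteq> 0 \<Longrightarrow> qinv q * q = 1"
  using qn_pos[of q] by (simp add: qinv_def qcnj_mult_self)

lemma qinv_nonzero: "q \<noteq> 0 \<Longrightarrow> qinv q \<noteq> 0"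
  using qinv_right by force

lemma qinv_cancel_left: "q \<noteq> 0 \<Longrightarrow> qinv q * (q * x) = x"
  by (simp add: mult.assoc[symmetric] qinv_left)

lemma quat_vec_add: "quat_vec (p + q) = quat_vec p + quat_vec q"
  by (simp add: quat_vec_def vec_eq_iff forall_4 vector_def)

lemma quat_vec_scaleR: "quat_vec (r *\<^sub>R q) = r *\<^sub>R quat_vec q"
  by (simp add: quat_vec_def vec_eq_iff forall_4 vector_def)

lemma quat_vec_eq_0_iff: "quat_vec x = 0 \<longleftrightarrow> x = 0"
  by (simp add: quat_vec_def vec_eq_iff forall_4 vector_def quat_eq_iff)

lemma qnorm_eq_norm: "qnorm q = norm (quat_vec q)"
  by (simp add: qnorm_def qn_def quat_vec_def norm_vec_def L2_set_def sum_4 vector_def)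

lemma qnorm_nonneg: "qnorm x \<ge> 0"
  by (simp add: qnorm_def qn_nonneg)

lemma qnorm_power2: "(qnorm x)\<^sup>2 = qn x"
  by (simp add: qnorm_def qn_nonneg)

lemma qnorm_le_sqrt: "qn x \<le> Y \<Longrightarrow> qnorm x \<le> sqrt Y"
  by (simp add: qnorm_def)

lemma qnorm_triangle: "qnorm (x + y) \<le> qnorm x + qnorm y"
  unfolding qnorm_eq_norm quat_vec_add by (rule norm_triangle_ineq)

lemma qnorm_scaleR: "qnorm (r *\<^sub>R x) = \<bar>r\<bar> * qnorm x"
  unfolding qnorm_eq_norm quat_vec_scaleR by simp

lemma qre_qcnj_mult_bound: "\<bar>qre (qcnj x * y)\<bar> \<le> qnorm x * qnorm y"
proof -
  have "qre (qcnj x * y) = quat_vec x \<bullet> quat_vec y"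
    by (simp add: quat_vec_def inner_vec_def sum_4 vector_def)
  then show ?thesis
    unfolding qnorm_eq_norm by (simp add: Cauchy_Schwarz_ineq2)
qed

definition qim :: "quat \<Rightarrow> quat" where
  "qim x = x - qre x *\<^sub>R 1"

lemma qre_qim [simp]: "qre (qim x) = 0"
  by (simp add: qim_def)

locale rational_quat_algebra =
  fixes A :: "quat set" and e :: "nat \<Rightarrow> quat"
  assumes one_in_A: "1 \<in> A"
    and add_in_A: "x \<in> A \<Longrightarrow> y \<in> A \<Longrightarrow> x + y \<in> A"
    and mult_in_A: "x \<in> A \<Longrightarrow> y \<in> A \<Longrightarrow> x * y \<in> A"
    and basis_indep: "real_lin_indep4 e"
    and A_eq: "A = {(\<Sum>i<4. of_rat (c i) *\<^sub>R e i) | c :: nat \<Rightarrow> rat. True}"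

lemma definite_quat_algebra_Q_imp_rational_quat_algebra:
  assumes "definite_quat_algebra_Q A"
  obtains e where "rational_quat_algebra A e"
proof -
  from assms obtain e where "real_lin_indep4 e"
    and "A = {(\<Sum>i<4. of_rat (c i) *\<^sub>R e i) | c :: nat \<Rightarrow> rat. True}"
    unfolding definite_quat_algebra_Q_def by auto
  with assms have "rational_quat_algebra A e"
    unfolding definite_quat_algebra_Q_def by unfold_locales simp_all
  then show ?thesis by (rule that)
qed

context rational_quat_algebra
begin

lemma mem_A_iff: "x \<in> A \<longleftrightarrow> (\<exists>c. x = (\<Sum>i<4. of_rat (c i) *\<^sub>R e i))"
  using A_eq by auto

lemma coords_unique:
  assumes "(\<Sum>i<4. r i *\<^sub>R e i) = (\<Sum>i<4. s i *\<^sub>R e i)" "i < 4"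
  shows "r i = s i"
proof -
  have "(\<Sum>i<4. (r i - s i) *\<^sub>R e i) = 0"
    using assms(1) by (simp add: scaleR_diff_left sum_subtractf)
  then show ?thesis
    using basis_indep assms(2) unfolding real_lin_indep4_def by fastforce
qed

lemma scaleR_Rats_in_A: "x \<in> A \<Longrightarrow> r \<in> \<rat> \<Longrightarrow> r *\<^sub>R x \<in> A"
proof (elim Rats_cases)
  fix q assume "x \<in> A" and r: "r = of_rat q"
  then obtain c where "x = (\<Sum>i<4. of_rat (c i) *\<^sub>R e i)"
    unfolding mem_A_iff by blast
  then have "r *\<^sub>R x = (\<Sum>i<4. of_rat (q * c i) *\<^sub>R e i)"
    by (simp add: r scaleR_sum_right of_rat_mult)
  then show "r *\<^sub>R x \<in> A"
    unfolding mem_A_iff by auto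
qed

lemma diff_in_A: "x \<in> A \<Longrightarrow> y \<in> A \<Longrightarrow> x - y \<in> A"
  using add_in_A[of x "(- 1) *\<^sub>R y"] scaleR_Rats_in_A[of y "- 1"] by simp

lemma sum_in_A: "(\<And>x. x \<in> S \<Longrightarrow> f x \<in> A) \<Longrightarrow> sum f S \<in> A"
proof (induction S rule: infinite_finite_induct)
  case (insert x F)
  then show ?case by (simp add: add_in_A)
qed (use scaleR_Rats_in_A[OF one_in_A, of 0] in simp_all)

lemma one_coords:
  obtains u i0 where "1 = (\<Sum>i<4. of_rat (u i) *\<^sub>R e i)" "i0 < 4" "u i0 \<noteq> 0"
proof -
  obtain u where u: "1 = (\<Sum>i<4. of_rat (u i) *\<^sub>R e i)"
    using one_in_A unfolding mem_A_iff by blast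
  moreover have "\<exists>i<4. u i \<noteq> 0"
  proof (rule ccontr)
    assume "\<not> (\<exists>i<4. u i \<noteq> 0)"
    then have "(\<Sum>i<4. of_rat (u i) *\<^sub>R e i) = (0 :: quat)" by simp
    with u show False by simp
  qed
  ultimately show ?thesis using that by blast
qed

text \<open>By Cayley--Hamilton, the coordinates of \<open>x * x\<close> are \<open>2 * qre x\<close> times those of \<open>x\<close>
  minus \<open>qn x\<close> times those of \<open>1\<close>. Unless \<open>x\<close> is a rational multiple of \<open>1\<close>, two of
  these rational linear equations can be solved for \<open>qre x\<close>.\<close>

lemma qre_in_Rats:
  assumes "x \<in> A"
  shows "qre x \<in> \<rat>"
proof -
  obtain u i0 where u: "1 = (\<Sum>i<4. of_rat (u i) *\<^sub>R e i)" and i0: "i0 < 4" "u i0 \<noteq> 0"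
    by (rule one_coords)
  obtain c where c: "x = (\<Sum>i<4. of_rat (c i) *\<^sub>R e i)"
    using assms unfolding mem_A_iff by blast
  obtain y where y: "x * x = (\<Sum>i<4. of_rat (y i) *\<^sub>R e i)"
    using mult_in_A[OF assms assms] unfolding mem_A_iff by blast
  define t where "t = 2 * qre x"
  have "(\<Sum>i<4. of_rat (y i) *\<^sub>R e i) = t *\<^sub>R x - qn x *\<^sub>R 1"
    unfolding y[symmetric] t_def by (rule quat_cayley_hamilton)
  also have "\<dots> = (\<Sum>i<4. (t * of_rat (c i) - qn x * of_rat (u i)) *\<^sub>R e i)"
    by (subst c, subst u) (simp only: scaleR_sum_right scaleR_diff_left sum_subtractf scaleR_scaleR)
  finally have y_coords: "\<And>i. i < 4 \<Longrightarrow> of_rat (y i) = t * of_rat (c i) - qn x * of_rat (u i)"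
    by (rule coords_unique)
  show ?thesis
  proof (cases "\<exists>i<4. \<exists>j<4. c i * u j \<noteq> c j * u i")
    case True
    then obtain i j where ij: "i < 4" "j < 4" "c i * u j \<noteq> c j * u i" by blast
    have "of_rat (y i * u j - y j * u i) = t * of_rat (c i * u j - c j * u i)"
      unfolding of_rat_diff of_rat_mult y_coords[OF ij(1)] y_coords[OF ij(2)] by algebra
    then have "t = of_rat ((y i * u j - y j * u i) / (c i * u j - c j * u i))"
      using ij(3) by (simp add: of_rat_divide field_simps)
    then have "t / 2 \<in> \<rat>" by simp
    then show ?thesis unfolding t_def by simp
  next
    case False
    define l where "l = c i0 / u i0"
    have "c j = l * u j" if "j < 4" for j
    proof -
      have "c j * u i0 = c i0 * u j" using False i0 that by blast
      then show ?thesis using i0 unfolding l_def by (simp add: field_simps)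
    qed
    then have "x = (\<Sum>j<4. of_rat l *\<^sub>R (of_rat (u j) *\<^sub>R e j))"
      unfolding c by (intro sum.cong) (auto simp: of_rat_mult)
    also have "\<dots> = of_rat l *\<^sub>R 1"
      by (simp only: u scaleR_sum_right)
    finally show ?thesis by simp
  qed
qed

lemma qcnj_in_A: "x \<in> A \<Longrightarrow> qcnj x \<in> A"
  by (simp add: qcnj_conv_qre diff_in_A scaleR_Rats_in_A one_in_A qre_in_Rats)

lemma qim_in_A: "x \<in> A \<Longrightarrow> qim x \<in> A"
  by (simp add: qim_def diff_in_A scaleR_Rats_in_A one_in_A qre_in_Rats)

lemma qn_in_Rats: "x \<in> A \<Longrightarrow> qn x \<in> \<rat>"
  using qre_in_Rats[OF mult_in_A[OF _ qcnj_in_A], of x x] by (simp add: mult_qcnj)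

lemma qinv_in_A: "x \<in> A \<Longrightarrow> qinv x \<in> A"
  by (simp add: qinv_def scaleR_Rats_in_A qcnj_in_A qn_in_Rats)

end

section \<open>Parabolic fixed points are rational\<close>

lemma dieudonne_det_sq_one_nonsingular:
  assumes "dieudonne_det_sq (\<alpha>, \<beta>, \<gamma>, \<delta>) = 1"
  shows "\<not> (\<alpha> * z + \<beta> = 0 \<and> \<gamma> * z + \<delta> = 0)"
proof
  assume "\<alpha> * z + \<beta> = 0 \<and> \<gamma> * z + \<delta> = 0"
  then have b: "\<beta> = - (\<alpha> * z)" and d: "\<delta> = - (\<gamma> * z)"
    by (simp_all add: eq_neg_iff_add_eq_0 add.commute)
  have "\<alpha> * qcnj \<gamma> * \<delta> * qcnj \<beta> = \<alpha> * (qcnj \<gamma> * \<gamma>) * (z * qcnj z) * qcnj \<alpha>"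
    by (simp add: b d qcnj_uminus qcnj_mult mult.assoc)
  also have "\<dots> = (qn \<gamma> * qn z * qn \<alpha>) *\<^sub>R 1"
    by (simp add: qcnj_mult_self mult_qcnj)
  finally have "qtr (\<alpha> * qcnj \<gamma> * \<delta> * qcnj \<beta>) = 2 * (qn \<alpha> * qn \<gamma> * qn z)"
    by (simp add: qtr_def)
  moreover have "qn (\<alpha> * \<delta>) = qn \<alpha> * qn \<gamma> * qn z" "qn (\<beta> * \<gamma>) = qn \<alpha> * qn \<gamma> * qn z"
    by (simp_all add: b d qn_mult)
  ultimately have "dieudonne_det_sq (\<alpha>, \<beta>, \<gamma>, \<delta>) = 0"
    by (simp add: dieudonne_det_sq_def)
  with assms show False by simp
qed

lemma bdry_act_fixed_iff:
  assumes "dieudonne_det_sq (\<alpha>, \<beta>, \<gamma>, \<delta>) = 1"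
  shows "bdry_act (\<alpha>, \<beta>, \<gamma>, \<delta>) (Some z) = Some z \<longleftrightarrow> \<alpha> * z + \<beta> = z * (\<gamma> * z + \<delta>)"
proof (cases "\<gamma> * z + \<delta> = 0")
  case True
  then show ?thesis
    using dieudonne_det_sq_one_nonsingular[OF assms] by (auto simp: bdry_act_def)
next
  case False
  have "(\<alpha> * z + \<beta>) * qinv (\<gamma> * z + \<delta>) = z \<longleftrightarrow> \<alpha> * z + \<beta> = z * (\<gamma> * z + \<delta>)"
  proof
    assume "(\<alpha> * z + \<beta>) * qinv (\<gamma> * z + \<delta>) = z"
    then have "(\<alpha> * z + \<beta>) * qinv (\<gamma> * z + \<delta>) * (\<gamma> * z + \<delta>) = z * (\<gamma> * z + \<delta>)"
      by simp
    then show "\<alpha> * z + \<beta> = z * (\<gamma> * z + \<delta>)"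
      using False by (simp add: mult.assoc qinv_left)
  next
    assume "\<alpha> * z + \<beta> = z * (\<gamma> * z + \<delta>)"
    then show "(\<alpha> * z + \<beta>) * qinv (\<gamma> * z + \<delta>) = z"
      using False by (simp add: mult.assoc qinv_right)
  qed
  with False show ?thesis by (simp add: bdry_act_def)
qed

lemma parabolic_fixed_point_SL2E:
  assumes "parabolic_fixed_point (SL2 \<O>) (Some s)"
  obtains \<alpha> \<beta> \<gamma> \<delta> where "\<alpha> \<in> \<O>" "\<beta> \<in> \<O>" "\<gamma> \<in> \<O>" "\<delta> \<in> \<O>" "\<gamma> \<noteq> 0"
    "\<alpha> * s + \<beta> = s * (\<gamma> * s + \<delta>)"
    "\<And>z. \<alpha> * z + \<beta> = z * (\<gamma> * z + \<delta>) \<Longrightarrow> z = s"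
proof -
  obtain \<alpha> \<beta> \<gamma> \<delta> where g: "(\<alpha>, \<beta>, \<gamma>, \<delta>) \<in> SL2 \<O>" and par: "parabolic (\<alpha>, \<beta>, \<gamma>, \<delta>)"
    and fixed: "bdry_act (\<alpha>, \<beta>, \<gamma>, \<delta>) (Some s) = Some s"
    using assms unfolding parabolic_fixed_point_def by auto
  have entries: "\<alpha> \<in> \<O>" "\<beta> \<in> \<O>" "\<gamma> \<in> \<O>" "\<delta> \<in> \<O>"
    and det: "dieudonne_det_sq (\<alpha>, \<beta>, \<gamma>, \<delta>) = 1"
    using g by (simp_all add: SL2_def)
  have unique: "x = Some s" if "bdry_act (\<alpha>, \<beta>, \<gamma>, \<delta>) x = x" for x
    using par fixed that unfolding parabolic_def by blast
  have "\<gamma> \<noteq> 0"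
  proof
    assume "\<gamma> = 0"
    then have "bdry_act (\<alpha>, \<beta>, \<gamma>, \<delta>) None = None"
      by (simp add: bdry_act_def)
    then show False
      using unique by blast
  qed
  moreover have "\<alpha> * s + \<beta> = s * (\<gamma> * s + \<delta>)"
    using fixed bdry_act_fixed_iff[OF det] by blast
  moreover have "z = s" if "\<alpha> * z + \<beta> = z * (\<gamma> * z + \<delta>)" for z
    using unique[of "Some z"] that bdry_act_fixed_iff[OF det] by blast
  ultimately show ?thesis
    using that entries by blast
qed

lemma char_poly_root_qre:
  assumes "a * a - (2 * qre d) *\<^sub>R a + qn d *\<^sub>R 1 = 0"
  shows "qre a = qre d"
proof (rule ccontr)
  assume ne: "qre a \<noteq> qre d"
  have e: "qre a * qre a - qi a * qi a - qj a * qj a - qk a * qk a - 2 * qre d * qre a + qn d = 0"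
    "2 * (qre a - qre d) * qi a = 0" "2 * (qre a - qre d) * qj a = 0" "2 * (qre a - qre d) * qk a = 0"
    using assms by (simp_all add: quat_eq_iff algebra_simps)
  from e(2-4) ne have "qi a = 0" "qj a = 0" "qk a = 0" by auto
  with e(1) have "(qre a - qre d)\<^sup>2 + (qi d)\<^sup>2 + (qj d)\<^sup>2 + (qk d)\<^sup>2 = 0"
    by (simp add: qn_def power2_eq_square algebra_simps)
  then have "(qre a - qre d)\<^sup>2 = 0"
    by (smt (verit) zero_le_power2)
  with ne show False by simp
qed

text \<open>Unless \<open>a\<close> is a root of the characteristic polynomial of \<open>d\<close>, the operator
  \<open>w \<mapsto> a * w - w * d\<close> is invertible: composing it with \<open>c \<mapsto> a * c - c * qcnj d\<close> gives
  left multiplication by the value \<open>M\<close> of that polynomial at \<open>a\<close>, which commutes with \<open>a\<close>.\<close>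

lemma sylvester_solvable:
  fixes a d c :: quat
  assumes "a * a - (2 * qre d) *\<^sub>R a + qn d *\<^sub>R 1 \<noteq> 0"
  obtains w where "a * w - w * d = c"
proof
  define M where "M = a * a - (2 * qre d) *\<^sub>R a + qn d *\<^sub>R 1"
  define X where "X = a * c - c * qcnj d"
  have M: "M \<noteq> 0"
    using assms by (simp add: M_def)
  have "M * a = a * M"
    by (simp add: M_def algebra_simps)
  have Minv_a: "qinv M * a = a * qinv M"
  proof -
    have "qinv M * a = qinv M * a * (M * qinv M)"
      using M by (simp add: qinv_right)
    also have "\<dots> = qinv M * (M * a) * qinv M"
      by (simp add: \<open>M * a = a * M\<close> mult.assoc)
    also have "\<dots> = a * qinv M"
      using M by (simp add: qinv_cancel_left)
    finally show ?thesis .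
  qed
  have "a * c * qcnj d + a * c * d = (a * c) * (qcnj d + d)"
    by (simp only: distrib_left)
  also have "\<dots> = (2 * qre d) *\<^sub>R (a * c)"
    by (simp add: qcnj_conv_qre)
  finally have "a * X - X * d = a * a * c - (2 * qre d) *\<^sub>R (a * c) + c * (qcnj d * d)"
    by (simp add: X_def algebra_simps)
  also have "\<dots> = M * c"
    by (simp add: qcnj_mult_self M_def algebra_simps)
  finally have aX: "a * X - X * d = M * c" .
  have "a * (qinv M * X) - qinv M * X * d = qinv M * (a * X - X * d)"
    by (simp only: mult.assoc[symmetric] Minv_a right_diff_distrib)
  also have "\<dots> = c"
    using M by (simp add: aX qinv_cancel_left)
  finally show "a * (qinv M * X) - qinv M * X * d = c" .
qed

text \<open>If \<open>\<gamma> * s + \<delta>\<close> were not a root of the characteristic polynomial of \<open>\<alpha> - s * \<gamma>\<close>,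
  a solution \<open>w\<close> of the Sylvester equation below would give the second fixed point
  \<open>s + qinv w\<close>.\<close>

lemma unique_fixed_point_qre:
  fixes \<alpha> \<beta> \<gamma> \<delta> s :: quat
  assumes "\<gamma> \<noteq> 0"
    and fixed: "\<alpha> * s + \<beta> = s * (\<gamma> * s + \<delta>)"
    and unique: "\<And>z. \<alpha> * z + \<beta> = z * (\<gamma> * z + \<delta>) \<Longrightarrow> z = s"
  shows "2 * qre (s * \<gamma>) = qre \<alpha> - qre \<delta>"
proof -
  define a where "a = \<gamma> * s + \<delta>"
  define d where "d = \<alpha> - s * \<gamma>"
  have "a * a - (2 * qre d) *\<^sub>R a + qn d *\<^sub>R 1 = 0"
  proof (rule ccontr)
    assume "a * a - (2 * qre d) *\<^sub>R a + qn d *\<^sub>R 1 \<noteq> 0"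
    then obtain w where sylvester: "a * w - w * d = - \<gamma>"
      by (rule sylvester_solvable)
    then have "w \<noteq> 0"
      using \<open>\<gamma> \<noteq> 0\<close> by auto
    have w_inv: "d * qinv w = qinv w * a + qinv w * \<gamma> * qinv w"
    proof -
      have "d * qinv w = qinv w * (w * d) * qinv w"
        using \<open>w \<noteq> 0\<close> by (simp add: qinv_cancel_left)
      also have "\<dots> = qinv w * (a * w + \<gamma>) * qinv w"
        using sylvester by (simp add: algebra_simps)
      also have "\<dots> = qinv w * a + qinv w * \<gamma> * qinv w"
        using \<open>w \<noteq> 0\<close> by (simp add: algebra_simps mult.assoc qinv_right)
      finally show ?thesis .
    qed
    have "(s + qinv w) * (\<gamma> * (s + qinv w) + \<delta>)
        = s * a + s * \<gamma> * qinv w + (qinv w * a + qinv w * \<gamma> * qinv w)"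
      by (simp add: a_def algebra_simps)
    also have "\<dots> = s * a + s * \<gamma> * qinv w + d * qinv w"
      by (simp add: w_inv)
    also have "\<dots> = \<alpha> * s + \<beta> + \<alpha> * qinv w"
      using fixed by (simp add: a_def d_def algebra_simps)
    finally have "\<alpha> * (s + qinv w) + \<beta> = (s + qinv w) * (\<gamma> * (s + qinv w) + \<delta>)"
      by (simp add: algebra_simps)
    then have "qinv w = 0"
      using unique by fastforce
    with qinv_nonzero[OF \<open>w \<noteq> 0\<close>] show False ..
  qed
  then have "qre a = qre d"
    by (rule char_poly_root_qre)
  then show ?thesis
    by (simp add: a_def d_def algebra_simps)
qed

text \<open>Under the trace condition, the shift \<open>t = \<tau> + v\<close> turns the monic quadratic in \<open>t\<close> into
  the quadratic \<open>v * Dv - Bv * v - qn v + C\<close> in the pure quaternion \<open>v\<close>; the next two lemmas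
  compute its unique pure root.\<close>

lemma quadratic_shift_qre:
  assumes "qre v = 0" "2 * \<tau> = qre B - qre D"
  shows "(\<tau> *\<^sub>R 1 + v) * (\<tau> *\<^sub>R 1 + v) + (\<tau> *\<^sub>R 1 + v) * D - B * (\<tau> *\<^sub>R 1 + v) - E
       = v * qim D - qim B * v - qn v *\<^sub>R 1 + (\<tau>\<^sup>2 *\<^sub>R 1 + \<tau> *\<^sub>R D - \<tau> *\<^sub>R B - E)"
proof -
  have "qre B = 2 * \<tau> + qre D"
    using assms(2) by simp
  then show ?thesis
    using assms(1) by (simp add: quat_eq_iff qim_def qn_def power2_eq_square algebra_simps)
qed

lemma unique_pure_root_eq_half:
  assumes "qre Dv = 0" "Bv = - Dv" "qre v0 = 0"
    and root: "v0 * Dv - Bv * v0 - qn v0 *\<^sub>R 1 + C = 0"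
    and unique: "\<And>v. qre v = 0 \<Longrightarrow> v * Dv - Bv * v - qn v *\<^sub>R 1 + C = 0 \<Longrightarrow> v = v0"
  shows "v0 = (1/2) *\<^sub>R (Bv - Dv)"
proof -
  have "(Bv - Dv - v0) * Dv - Bv * (Bv - Dv - v0) - qn (Bv - Dv - v0) *\<^sub>R 1 + C
      = v0 * Dv - Bv * v0 - qn v0 *\<^sub>R 1 + C"
    using assms(1-3) by (simp add: quat_eq_iff qn_def power2_eq_square algebra_simps)
  then have "Bv - Dv - v0 = v0"
    using root assms(1-3) by (intro unique) simp_all
  then show ?thesis
    by (simp add: quat_eq_iff)
qed

text \<open>Moving a root \<open>v0\<close> along \<open>S = Dv + Bv\<close> changes the value of the polynomial by a
  real quadratic in the step, whose second root must be \<open>0\<close> by uniqueness; this pins down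
  \<open>qre (v0 * S)\<close>, and the polynomial at \<open>v0\<close> then expresses \<open>v0 * S\<close> linearly.\<close>

lemma unique_pure_root_eq:
  assumes pure: "qre Dv = 0" "qre Bv = 0" "qre v0 = 0"
    and S: "Dv + Bv \<noteq> 0"
    and root: "v0 * Dv - Bv * v0 - qn v0 *\<^sub>R 1 + C = 0"
    and unique: "\<And>v. qre v = 0 \<Longrightarrow> v * Dv - Bv * v - qn v *\<^sub>R 1 + C = 0 \<Longrightarrow> v = v0"
  shows "v0 = ((qre ((Bv - Dv) * (Dv + Bv)) / 2) *\<^sub>R 1 - qim C) * qinv (Dv + Bv)"
proof -
  define S where "S = Dv + Bv"
  define T where "T = Bv - Dv"
  define \<mu> where "\<mu> = (- qre (T * S) + 2 * qre (v0 * S)) / qn S"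
  have "qn S > 0"
    using S by (simp add: S_def qn_pos)
  have "(v0 + \<mu> *\<^sub>R S) * Dv - Bv * (v0 + \<mu> *\<^sub>R S) - qn (v0 + \<mu> *\<^sub>R S) *\<^sub>R 1 + C
      = (v0 * Dv - Bv * v0 - qn v0 *\<^sub>R 1 + C)
        + (\<mu> * (- qre (T * S) + 2 * qre (v0 * S) - \<mu> * qn S)) *\<^sub>R 1"
    using pure by (simp add: S_def T_def quat_eq_iff qn_def power2_eq_square algebra_simps)
  also have "- qre (T * S) + 2 * qre (v0 * S) - \<mu> * qn S = 0"
    using \<open>qn S > 0\<close> by (simp add: \<mu>_def)
  finally have "v0 + \<mu> *\<^sub>R S = v0"
    using root pure by (intro unique) (simp_all add: S_def)
  then have "\<mu> = 0"
    using S by (simp add: S_def)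
  then have re_v0S: "qre (v0 * S) = qre (T * S) / 2"
    using \<open>qn S > 0\<close> by (simp add: \<mu>_def)
  have "v0 * S = (v0 * Dv - Bv * v0) + (2 * qre (v0 * Bv)) *\<^sub>R 1"
    using pure by (simp add: S_def quat_eq_iff algebra_simps)
  also have "v0 * Dv - Bv * v0 = qn v0 *\<^sub>R 1 - C"
    using root by (simp add: algebra_simps)
  finally have "v0 * S = (qn v0 + 2 * qre (v0 * Bv)) *\<^sub>R 1 - C"
    by (simp add: algebra_simps)
  then have "v0 * S = qre (v0 * S) *\<^sub>R 1 - qim C"
    by (simp add: quat_eq_iff qim_def)
  then have v0S: "v0 * S = (qre (T * S) / 2) *\<^sub>R 1 - qim C"
    by (simp only: re_v0S)
  have "v0 = v0 * S * qinv S"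
    using S by (simp add: S_def mult.assoc qinv_right)
  also have "\<dots> = ((qre (T * S) / 2) *\<^sub>R 1 - qim C) * qinv S"
    by (simp only: v0S)
  finally show ?thesis
    by (simp only: S_def T_def)
qed

context rational_quat_algebra
begin

lemma unique_pure_root_in_A:
  assumes "Dv \<in> A" "Bv \<in> A" "C \<in> A" "qre Dv = 0" "qre Bv = 0" "qre v0 = 0"
    and root: "v0 * Dv - Bv * v0 - qn v0 *\<^sub>R 1 + C = 0"
    and unique: "\<And>v. qre v = 0 \<Longrightarrow> v * Dv - Bv * v - qn v *\<^sub>R 1 + C = 0 \<Longrightarrow> v = v0"
  shows "v0 \<in> A"
proof (cases "Dv + Bv = 0")
  case True
  then have "Bv = - Dv"
    by (simp add: eq_neg_iff_add_eq_0 add.commute)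
  with assms(4) have "v0 = (1/2) *\<^sub>R (Bv - Dv)"
    using assms(6) root unique by (rule unique_pure_root_eq_half)
  then show ?thesis
    using assms(1,2) by (auto intro: diff_in_A scaleR_Rats_in_A)
next
  case False
  have "v0 = ((qre ((Bv - Dv) * (Dv + Bv)) / 2) *\<^sub>R 1 - qim C) * qinv (Dv + Bv)"
    using assms(4-6) False root unique by (rule unique_pure_root_eq)
  also have "\<dots> \<in> A"
    using assms(1-3)
    by (intro mult_in_A diff_in_A scaleR_Rats_in_A one_in_A qim_in_A qinv_in_A add_in_A
        Rats_divide qre_in_Rats) (simp_all add: Rats_number_of)
  finally show ?thesis .
qed

lemma unique_root_in_A:
  assumes "B \<in> A" "D \<in> A" "E \<in> A"
    and root: "t0 * t0 + t0 * D - B * t0 - E = 0"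
    and unique: "\<And>t. t * t + t * D - B * t - E = 0 \<Longrightarrow> t = t0"
    and re: "2 * qre t0 = qre B - qre D"
  shows "t0 \<in> A"
proof -
  define \<tau> where "\<tau> = qre t0"
  define C where "C = \<tau>\<^sup>2 *\<^sub>R 1 + \<tau> *\<^sub>R D - \<tau> *\<^sub>R B - E"
  have t0: "t0 = \<tau> *\<^sub>R 1 + qim t0"
    by (simp add: qim_def \<tau>_def)
  have "(qre B - qre D) / 2 \<in> \<rat>"
    using assms(1,2) by (intro Rats_divide Rats_diff qre_in_Rats) simp_all
  moreover have "\<tau> = (qre B - qre D) / 2"
    using re by (simp add: \<tau>_def)
  ultimately have "\<tau> \<in> \<rat>"
    by metis
  then have "C \<in> A"
    unfolding C_def using assms(1-3)
    by (intro diff_in_A add_in_A scaleR_Rats_in_A one_in_A Rats_power) simp_all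
  have shift: "(\<tau> *\<^sub>R 1 + v) * (\<tau> *\<^sub>R 1 + v) + (\<tau> *\<^sub>R 1 + v) * D - B * (\<tau> *\<^sub>R 1 + v) - E
      = v * qim D - qim B * v - qn v *\<^sub>R 1 + C" if "qre v = 0" for v
    unfolding C_def using that re by (intro quadratic_shift_qre) (simp_all add: \<tau>_def)
  have "qim t0 \<in> A"
  proof (rule unique_pure_root_in_A)
    show "qim t0 * qim D - qim B * qim t0 - qn (qim t0) *\<^sub>R 1 + C = 0"
      using root shift[of "qim t0"] by (simp flip: t0)
    show "v = qim t0" if "qre v = 0" "v * qim D - qim B * v - qn v *\<^sub>R 1 + C = 0" for v
    proof -
      have "\<tau> *\<^sub>R 1 + v = t0"
        using that shift[of v] by (intro unique) simp
      then show ?thesis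
        using that(1) by (auto simp: qim_def \<tau>_def quat_eq_iff)
    qed
  qed (use assms(1,2) \<open>C \<in> A\<close> in \<open>simp_all add: qim_in_A\<close>)
  then show ?thesis
    using \<open>\<tau> \<in> \<rat>\<close> by (subst t0) (simp add: add_in_A scaleR_Rats_in_A one_in_A)
qed

text \<open>The substitution \<open>z = t * qinv \<gamma>\<close> turns the fixed point equation into a monic
  quadratic equation for \<open>t\<close>.\<close>

lemma unique_fixed_point_in_A:
  assumes "\<alpha> \<in> A" "\<beta> \<in> A" "\<gamma> \<in> A" "\<delta> \<in> A" "\<gamma> \<noteq> 0"
    and fixed: "\<alpha> * s + \<beta> = s * (\<gamma> * s + \<delta>)"
    and unique: "\<And>z. \<alpha> * z + \<beta> = z * (\<gamma> * z + \<delta>) \<Longrightarrow> z = s"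
  shows "s \<in> A"
proof -
  define D where "D = qinv \<gamma> * \<delta> * \<gamma>"
  define E where "E = \<beta> * \<gamma>"
  have subst: "(t * t + t * D - \<alpha> * t - E) * qinv \<gamma>
      = (t * qinv \<gamma>) * (\<gamma> * (t * qinv \<gamma>) + \<delta>) - (\<alpha> * (t * qinv \<gamma>) + \<beta>)" for t
    using \<open>\<gamma> \<noteq> 0\<close> by (simp add: D_def E_def algebra_simps qinv_cancel_left qinv_right)
  have s_eq: "s * \<gamma> * qinv \<gamma> = s"
    using \<open>\<gamma> \<noteq> 0\<close> by (simp add: mult.assoc qinv_right)
  have "s * \<gamma> \<in> A"
  proof (rule unique_root_in_A)
    show "\<alpha> \<in> A" "D \<in> A" "E \<in> A"
      using assms(1-5) by (simp_all add: D_def E_def mult_in_A qinv_in_A)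
    have "(s * \<gamma> * (s * \<gamma>) + s * \<gamma> * D - \<alpha> * (s * \<gamma>) - E) * qinv \<gamma> = 0"
      using subst[of "s * \<gamma>"] fixed by (simp add: s_eq)
    then show "s * \<gamma> * (s * \<gamma>) + s * \<gamma> * D - \<alpha> * (s * \<gamma>) - E = 0"
      using qinv_nonzero[OF \<open>\<gamma> \<noteq> 0\<close>] by simp
    show "t = s * \<gamma>" if "t * t + t * D - \<alpha> * t - E = 0" for t
    proof -
      have "t * qinv \<gamma> = s"
        using that subst[of t] by (intro unique) simp
      then show ?thesis
        using \<open>\<gamma> \<noteq> 0\<close> by (auto simp: mult.assoc qinv_left)
    qed
    have "qre D = qre \<delta>"
      using \<open>\<gamma> \<noteq> 0\<close> unfolding D_def mult.assoc qre_mult_commute[of "qinv \<gamma>"]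
      by (simp add: mult.assoc[symmetric] qinv_right)
    then show "2 * qre (s * \<gamma>) = qre \<alpha> - qre D"
      using unique_fixed_point_qre[OF \<open>\<gamma> \<noteq> 0\<close> fixed unique] by simp
  qed
  then have "s * \<gamma> * qinv \<gamma> \<in> A"
    using assms(3,5) by (simp add: mult_in_A qinv_in_A)
  then show ?thesis
    by (simp only: s_eq)
qed

lemma parabolic_fixed_point_in_A:
  assumes "\<O> \<subseteq> A" "parabolic_fixed_point (SL2 \<O>) (Some s)"
  shows "s \<in> A"
  using assms(2)
proof (rule parabolic_fixed_point_SL2E)
  fix \<alpha> \<beta> \<gamma> \<delta>
  assume "\<alpha> \<in> \<O>" "\<beta> \<in> \<O>" "\<gamma> \<in> \<O>" "\<delta> \<in> \<O>" and "\<gamma> \<noteq> 0"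
    and fixed: "\<alpha> * s + \<beta> = s * (\<gamma> * s + \<delta>)"
    and unique: "\<And>z. \<alpha> * z + \<beta> = z * (\<gamma> * z + \<delta>) \<Longrightarrow> z = s"
  then have "\<alpha> \<in> A" "\<beta> \<in> A" "\<gamma> \<in> A" "\<delta> \<in> A"
    using assms(1) by blast+
  from this \<open>\<gamma> \<noteq> 0\<close> fixed unique show "s \<in> A"
    by (rule unique_fixed_point_in_A)
qed

end

section \<open>Orders are lattices\<close>

lemma common_denominator:
  fixes R :: "real set"
  assumes "finite R" "R \<subseteq> \<rat>"
  obtains N :: int where "N > 0" "\<And>r. r \<in> R \<Longrightarrow> of_int N * r \<in> \<int>"
proof -
  have "\<exists>N::int. N > 0 \<and> (\<forall>r\<in>R. of_int N * r \<in> \<int>)"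
    using assms
  proof (induction R rule: finite_induct)
    case empty
    then show ?case by (intro exI[of _ 1]) simp
  next
    case (insert q R)
    then obtain N where N: "N > 0" "\<forall>r\<in>R. of_int N * r \<in> \<int>" by auto
    from insert.prems obtain q' where q': "q = of_rat q'" by (auto elim: Rats_cases)
    obtain p d where pd: "quotient_of q' = (p, d)" by (cases "quotient_of q'")
    have d: "d > 0" using quotient_of_denom_pos[OF pd] .
    have "of_int (N * d) * q = (of_int (N * p) :: real)"
      using d unfolding q' quotient_of_div[OF pd] by (simp add: of_rat_divide field_simps)
    then have "of_int (N * d) * q \<in> \<int>"
      by (metis Ints_of_int)
    moreover have "of_int (N * d) * r \<in> \<int>" if "r \<in> R" for r
    proof -
      have "of_int d * (of_int N * r) \<in> \<int>"
        using N that by (auto intro: Ints_mult[OF Ints_of_int])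
      then show ?thesis by (simp add: algebra_simps)
    qed
    ultimately show ?case
      using N d by (intro exI[of _ "N * d"]) (auto simp del: of_int_mult)
  qed
  then show ?thesis using that by blast
qed

lemma sum_lessThan_4: "(\<Sum>i<(4::nat). f i) = f 0 + f 1 + f 2 + f 3"
  by (simp add: numeral_eq_Suc lessThan_Suc add.assoc add.commute add.left_commute)

context rational_quat_algebra
begin

definition lattice :: "int \<Rightarrow> quat set" where
  "lattice N = {x. \<exists>r. x = (\<Sum>i<4. r i *\<^sub>R e i) \<and> (\<forall>i<4. of_int N * r i \<in> \<int>)}"

lemma coords_bounded_by_qnorm:
  obtains B where "B > 0" "\<And>r i. i < 4 \<Longrightarrow> B * \<bar>r i\<bar> \<le> qnorm (\<Sum>i<4. r i *\<^sub>R e i)"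
proof -
  define L where "L c = quat_vec ((c$1) *\<^sub>R e 0 + (c$2) *\<^sub>R e 1 + (c$3) *\<^sub>R e 2 + (c$4) *\<^sub>R e 3)"
    for c :: "real^4"
  have "linear L"
    by (rule linearI) (simp_all add: L_def quat_vec_add[symmetric] quat_vec_scaleR[symmetric]
        algebra_simps scaleR_add_right)
  moreover have "inj L"
    unfolding linear_injective_0[OF \<open>linear L\<close>]
  proof (intro allI impI)
    fix c :: "real^4"
    assume "L c = 0"
    define r where "r i = (if i = 0 then c$1 else if i = 1 then c$2 else if i = 2 then c$3 else c$4)"
      for i :: nat
    have "(\<Sum>i<4. r i *\<^sub>R e i) = 0"
      using \<open>L c = 0\<close> by (simp add: L_def quat_vec_eq_0_iff sum_lessThan_4 r_def)
    then have "\<forall>i<4. r i = 0"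
      using basis_indep unfolding real_lin_indep4_def by blast
    then have "c$1 = 0" "c$2 = 0" "c$3 = 0" "c$4 = 0"
      by (auto simp: r_def dest: spec[of _ 0] spec[of _ 1] spec[of _ 2] spec[of _ 3])
    then show "c = 0"
      by (simp add: vec_eq_iff forall_4)
  qed
  ultimately obtain B where B: "B > 0" "\<And>x. B * norm x \<le> norm (L x)"
    using linear_inj_bounded_below_pos by blast
  show ?thesis
  proof (rule that[OF \<open>B > 0\<close>])
    fix r :: "nat \<Rightarrow> real" and i :: nat
    assume "i < 4"
    define c :: "real^4" where "c = vector [r 0, r 1, r 2, r 3]"
    have "i = 0 \<or> i = 1 \<or> i = 2 \<or> i = 3"
      using \<open>i < 4\<close> by auto
    then have "\<bar>r i\<bar> \<le> norm c"
      using component_le_norm_cart[of c 1] component_le_norm_cart[of c 2]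
        component_le_norm_cart[of c 3] component_le_norm_cart[of c 4]
      by (auto simp: c_def vector_def)
    then have "B * \<bar>r i\<bar> \<le> norm (L c)"
      using B by (meson mult_left_mono less_imp_le order_trans)
    also have "L c = quat_vec (\<Sum>i<4. r i *\<^sub>R e i)"
      by (simp add: L_def c_def sum_lessThan_4 vector_def)
    finally show "B * \<bar>r i\<bar> \<le> qnorm (\<Sum>i<4. r i *\<^sub>R e i)"
      by (simp add: qnorm_eq_norm)
  qed
qed

lemma finite_lattice_qn_le:
  assumes "N > 0"
  shows "finite {x \<in> lattice N. qn x \<le> Y}"
proof -
  obtain B where B: "B > 0" "\<And>r i. i < 4 \<Longrightarrow> B * \<bar>r i\<bar> \<le> qnorm (\<Sum>i<4. r i *\<^sub>R e i)"
    by (rule coords_bounded_by_qnorm) blast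
  define K where "K = \<lceil>of_int N * sqrt Y / B\<rceil>"
  define f where "f = (\<lambda>(m0::int, m1::int, m2::int, m3::int).
     (of_int m0 / of_int N) *\<^sub>R e 0 + (of_int m1 / of_int N) *\<^sub>R e 1 +
     (of_int m2 / of_int N) *\<^sub>R e 2 + (of_int m3 / of_int N) *\<^sub>R e 3)"
  have "{x \<in> lattice N. qn x \<le> Y} \<subseteq> f ` ({-K..K} \<times> {-K..K} \<times> {-K..K} \<times> {-K..K})"
  proof
    fix x assume "x \<in> {x \<in> lattice N. qn x \<le> Y}"
    then obtain r where x: "x = (\<Sum>i<4. r i *\<^sub>R e i)" and r: "\<forall>i<4. of_int N * r i \<in> \<int>"
      and "qn x \<le> Y"
      unfolding lattice_def by blast
    have "\<forall>i. \<exists>k. i < 4 \<longrightarrow> of_int N * r i = of_int k"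
      using r by (metis Ints_cases)
    then obtain m where m: "\<And>i. i < 4 \<Longrightarrow> of_int N * r i = of_int (m i)"
      by metis
    have m_bound: "m i \<in> {-K..K}" if "i < 4" for i
    proof -
      have "B * \<bar>r i\<bar> \<le> sqrt Y"
        using B(2)[OF that, of r] qnorm_le_sqrt[OF \<open>qn x \<le> Y\<close>] x by simp
      then have "of_int N * \<bar>r i\<bar> \<le> of_int N * sqrt Y / B"
        using assms B(1) by (simp add: field_simps)
      moreover have "\<bar>of_int (m i)\<bar> = of_int N * \<bar>r i\<bar>"
        unfolding m[OF that, symmetric] using assms by (simp add: abs_mult)
      ultimately have "\<bar>m i\<bar> \<le> K"
        unfolding K_def by linarith
      then show ?thesis
        by (simp add: abs_le_iff)
    qed
    have "r i = of_int (m i) / of_int N" if "i < 4" for i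
      using m[OF that] assms by (simp add: field_simps)
    then have "x = f (m 0, m 1, m 2, m 3)"
      by (simp add: x f_def sum_lessThan_4)
    then show "x \<in> f ` ({-K..K} \<times> {-K..K} \<times> {-K..K} \<times> {-K..K})"
      using m_bound by auto
  qed
  then show ?thesis
    by (rule finite_subset) simp
qed

lemma quat_order_generators:
  assumes "quat_order A \<O>"
  obtains S where "finite S" "S \<subseteq> A" "\<O> = {(\<Sum>s\<in>S. of_int (k s) *\<^sub>R s) | k :: quat \<Rightarrow> int. True}"
proof -
  obtain S where S: "finite S" "S \<subseteq> \<O>"
    "\<O> = {(\<Sum>s\<in>S. of_int (k s) *\<^sub>R s) | k :: quat \<Rightarrow> int. True}"
    "A = {(\<Sum>s\<in>S. of_rat (c s) *\<^sub>R s) | c :: quat \<Rightarrow> rat. True}"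
    using assms unfolding quat_order_def by blast
  have "x \<in> A" if "x \<in> S" for x
  proof -
    have "x = (\<Sum>s\<in>S. of_rat (if s = x then 1 else 0) *\<^sub>R s)"
      using that S(1) by (simp add: if_distrib[of of_rat] if_distrib[of "\<lambda>t. t *\<^sub>R _"] cong: if_cong)
    then show "x \<in> A"
      unfolding S(4) by (intro CollectI exI[of _ "\<lambda>s. if s = x then 1 else 0"]) simp
  qed
  with S(1,3) that show ?thesis
    by blast
qed

lemma quat_order_subset_A:
  assumes "quat_order A \<O>"
  shows "\<O> \<subseteq> A"
proof
  fix b assume "b \<in> \<O>"
  obtain S where S: "finite S" "S \<subseteq> A" "\<O> = {(\<Sum>s\<in>S. of_int (k s) *\<^sub>R s) | k :: quat \<Rightarrow> int. True}"
    using assms by (rule quat_order_generators)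
  obtain k where "b = (\<Sum>s\<in>S. of_int (k s) *\<^sub>R s)"
    using \<open>b \<in> \<O>\<close> S(3) by blast
  also have "\<dots> \<in> A"
    using S(2) by (intro sum_in_A scaleR_Rats_in_A) auto
  finally show "b \<in> A" .
qed

lemma quat_order_subset_lattice:
  assumes "quat_order A \<O>"
  obtains N where "N > 0" "\<O> \<subseteq> lattice N"
proof -
  obtain S where S: "finite S" "S \<subseteq> A" "\<O> = {(\<Sum>s\<in>S. of_int (k s) *\<^sub>R s) | k :: quat \<Rightarrow> int. True}"
    using assms by (rule quat_order_generators)
  have "\<forall>x\<in>S. \<exists>c. x = (\<Sum>i<4. of_rat (c i) *\<^sub>R e i)"
    using S(2) mem_A_iff by blast
  then obtain cc where cc: "\<And>x. x \<in> S \<Longrightarrow> x = (\<Sum>i<4. of_rat (cc x i) *\<^sub>R e i)"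
    by metis
  define R where "R = (\<lambda>(x, i). (of_rat (cc x i) :: real)) ` (S \<times> {..<4})"
  have "finite R" "R \<subseteq> \<rat>"
    using S(1) by (auto simp: R_def)
  then obtain N where N: "N > 0" "\<And>r. r \<in> R \<Longrightarrow> of_int N * r \<in> \<int>"
    by (rule common_denominator) blast
  have "b \<in> lattice N" if b: "b \<in> \<O>" for b
  proof -
    obtain k where k: "b = (\<Sum>s\<in>S. of_int (k s) *\<^sub>R s)"
      using b S(3) by blast
    define r :: "nat \<Rightarrow> real" where "r i = (\<Sum>s\<in>S. of_int (k s) * of_rat (cc s i))" for i
    have "b = (\<Sum>s\<in>S. \<Sum>i<4. (of_int (k s) * of_rat (cc s i)) *\<^sub>R e i)"
      unfolding k by (intro sum.cong refl) (subst cc, auto simp: scaleR_sum_right)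
    also have "\<dots> = (\<Sum>i<4. r i *\<^sub>R e i)"
      by (subst sum.swap) (simp only: r_def scaleR_sum_left)
    finally have "b = (\<Sum>i<4. r i *\<^sub>R e i)" .
    moreover have "of_int N * r i \<in> \<int>" if "i < 4" for i
    proof -
      have "of_int N * r i = (\<Sum>s\<in>S. of_int (k s) * (of_int N * of_rat (cc s i)))"
        by (simp add: r_def sum_distrib_left algebra_simps)
      also have "\<dots> \<in> \<int>"
        by (rule Ints_sum, rule Ints_mult[OF Ints_of_int], rule N(2)) (use that in \<open>force simp: R_def\<close>)
      finally show ?thesis .
    qed
    ultimately show ?thesis
      unfolding lattice_def by blast
  qed
  with N(1) that show ?thesis
    by blast
qed

lemma quat_order_denominator:
  assumes "quat_order A \<O>" "s \<in> A"
  obtains D :: int where "D > 0" "of_int D * qn s \<in> \<int>"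
    "\<forall>b\<in>\<O>. of_int D * qre (qcnj s * b) \<in> \<int>"
proof -
  obtain S where S: "finite S" "S \<subseteq> A" "\<O> = {(\<Sum>s\<in>S. of_int (k s) *\<^sub>R s) | k :: quat \<Rightarrow> int. True}"
    using assms(1) by (rule quat_order_generators)
  define R where "R = insert (qn s) ((\<lambda>x. qre (qcnj s * x)) ` S)"
  have "qre (qcnj s * x) \<in> \<rat>" if "x \<in> S" for x
    using assms(2) S(2) that by (intro qre_in_Rats mult_in_A qcnj_in_A) auto
  then have "R \<subseteq> \<rat>"
    using qn_in_Rats[OF assms(2)] unfolding R_def image_subset_iff insert_subset by blast
  with S(1) have "finite R" "R \<subseteq> \<rat>"
    by (simp_all add: R_def)
  then obtain D where D: "D > 0" "\<And>r. r \<in> R \<Longrightarrow> of_int D * r \<in> \<int>"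
    by (rule common_denominator) blast
  have "of_int D * qre (qcnj s * b) \<in> \<int>" if "b \<in> \<O>" for b
  proof -
    obtain k where k: "b = (\<Sum>x\<in>S. of_int (k x) *\<^sub>R x)"
      using \<open>b \<in> \<O>\<close> S(3) by blast
    have "of_int D * qre (qcnj s * b) = (\<Sum>x\<in>S. of_int (k x) * (of_int D * qre (qcnj s * x)))"
      by (simp add: k sum_distrib_left qre_sum algebra_simps)
    also have "\<dots> \<in> \<int>"
      by (rule Ints_sum, rule Ints_mult[OF Ints_of_int], rule D(2)) (simp add: R_def)
    finally show ?thesis .
  qed
  moreover have "of_int D * qn s \<in> \<int>"
    by (rule D(2)) (simp add: R_def)
  ultimately show ?thesis
    using D(1) that by blast
qed

end

section \<open>The coefficients of reduced forms are bounded\<close>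

lemma reduced_form_point:
  assumes disc: "qn b - of_int a * of_int c = of_int \<Delta>"
    and "reduced_form F (a, b, c)" "a \<noteq> 0"
  obtains z r where "(z, r) \<in> F" "r > 0"
    "qn (z + (1 / of_int a) *\<^sub>R b) + r\<^sup>2 = \<bar>of_int \<Delta>\<bar> / (of_int a)\<^sup>2"
    "\<Delta> < 0 \<Longrightarrow> z + (1 / of_int a) *\<^sub>R b = 0"
proof -
  define A C D where "A = real_of_int a" and "C = real_of_int c" and "D = real_of_int \<Delta>"
  have "A \<noteq> 0"
    using \<open>a \<noteq> 0\<close> by (simp add: A_def)
  have fd: "form_disc (A, b, C) = D" "form_disc (- A, - b, - C) = D"
    using disc by (simp_all add: form_disc_def A_def C_def D_def)
  from assms(2) consider
      "a > 0" "D < 0" "pos_def_reduced F (A, b, C)"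
    | "a < 0" "D < 0" "pos_def_reduced F (- A, - b, - C)"
    | "D > 0" "form_C (A, b, C) \<inter> F \<noteq> {}"
    unfolding reduced_form_def Let_def using fd by (auto simp: A_def C_def)
  then show ?thesis
  proof cases
    case 1
    have "r\<^sup>2 = \<bar>D\<bar> / A\<^sup>2" if "r = sqrt (- D) / A" for r
      using \<open>D < 0\<close> that by (simp add: power_divide)
    with 1 fd show ?thesis
      by (intro that[of "(- 1 / A) *\<^sub>R b" "sqrt (- D) / A"])
        (auto simp: pos_def_reduced_def A_def D_def scaleR_left_distrib[symmetric])
  next
    case 2
    have "r\<^sup>2 = \<bar>D\<bar> / A\<^sup>2" if "r = sqrt (- D) / - A" for r
      using \<open>D < 0\<close> that by (simp add: power_divide)
    with 2 fd show ?thesis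
      by (intro that[of "(- 1 / - A) *\<^sub>R - b" "sqrt (- D) / - A"])
        (auto simp: pos_def_reduced_def A_def D_def divide_pos_neg)
  next
    case 3
    then obtain z r where "(z, r) \<in> F" "r > 0" and eq: "A * qn z + 2 * qre (qcnj z * b) + C + A * r\<^sup>2 = 0"
      by (auto simp: form_C_def form_eval_def qtr_def)
    have "A * (qn (z + (1 / A) *\<^sub>R b) + r\<^sup>2) = A * qn z + 2 * qre (qcnj z * b) + A * r\<^sup>2 + qn b / A"
      using \<open>A \<noteq> 0\<close> by (simp add: qn_add qn_scaleR field_simps power2_eq_square)
    also have "\<dots> = qn b / A - C"
      using eq by linarith
    also have "\<dots> = A * (D / A\<^sup>2)"
      using fd(1) \<open>A \<noteq> 0\<close> by (simp add: form_disc_def field_simps power2_eq_square)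
    finally have "qn (z + (1 / A) *\<^sub>R b) + r\<^sup>2 = D / A\<^sup>2"
      by (simp only: mult_left_cancel[OF \<open>A \<noteq> 0\<close>])
    with 3 show ?thesis
      using \<open>(z, r) \<in> F\<close> \<open>r > 0\<close> by (intro that) (auto simp: A_def D_def)
  qed
qed

lemma form_value_near_point:
  fixes A C Dl r :: real and b s z :: quat
  assumes "A \<noteq> 0" "Dl \<noteq> 0" "qn b - A * C = Dl"
    and point: "qn (z + (1 / A) *\<^sub>R b) + r\<^sup>2 = \<bar>Dl\<bar> / A\<^sup>2"
    and definite: "Dl < 0 \<Longrightarrow> z + (1 / A) *\<^sub>R b = 0"
  shows "form_eval (A, b, C) s 1
    = A * (qn (z - s) - 2 * qre (qcnj (z + (1 / A) *\<^sub>R b) * (z - s)) - sgn Dl * r\<^sup>2)"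
proof -
  define p w where "p = z + (1 / A) *\<^sub>R b" and "w = z - s"
  define d where "d = qre (qcnj p * w)"
  have "qn (s + (1 / A) *\<^sub>R b) = qn s + (2 / A) * qre (qcnj s * b) + qn b / A\<^sup>2"
    by (simp only: qn_add qn_scaleR) (simp add: power_divide)
  then have "form_eval (A, b, C) s 1 = A * qn (s + (1 / A) *\<^sub>R b) - Dl / A"
    using \<open>A \<noteq> 0\<close> assms(3)
    by (simp add: form_eval_def qtr_def field_simps power2_eq_square)
  also have "s + (1 / A) *\<^sub>R b = p - w"
    by (simp add: p_def w_def algebra_simps)
  also have "qn (p - w) = qn p - 2 * d + qn w"
    by (simp only: qn_diff d_def)
  also have "Dl / A = A * sgn Dl * (qn p + r\<^sup>2)"
    using \<open>A \<noteq> 0\<close> \<open>Dl \<noteq> 0\<close> point definite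
    by (cases "Dl > 0") (simp_all add: p_def field_simps power2_eq_square)
  finally have "form_eval (A, b, C) s 1 = A * (qn p - 2 * d + qn w) - A * sgn Dl * (qn p + r\<^sup>2)" .
  moreover have "Dl < 0 \<Longrightarrow> qn p = 0 \<and> d = 0"
    using definite by (simp add: p_def d_def)
  ultimately show ?thesis
    using \<open>Dl \<noteq> 0\<close> unfolding p_def[symmetric] w_def[symmetric] d_def[symmetric]
    by (cases "Dl > 0") (simp_all add: algebra_simps)
qed

lemma cusp_distance_estimate:
  fixes p w :: quat and \<kappa> r R :: real
  assumes "qnorm w \<le> \<kappa> * r\<^sup>2" "qnorm p \<le> R" "0 \<le> r" "r \<le> R" "0 \<le> \<kappa>"
  shows "qn w + 2 * \<bar>qre (qcnj p * w)\<bar> \<le> r\<^sup>2 * (\<kappa>\<^sup>2 * R\<^sup>2 + 2 * \<kappa> * R)"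
proof -
  have "qn w \<le> (\<kappa> * r\<^sup>2)\<^sup>2"
    unfolding qnorm_power2[symmetric] using assms(1) qnorm_nonneg by (rule power_mono)
  also have "\<dots> = r\<^sup>2 * (\<kappa>\<^sup>2 * r\<^sup>2)"
    by (simp add: power2_eq_square)
  also have "\<dots> \<le> r\<^sup>2 * (\<kappa>\<^sup>2 * R\<^sup>2)"
    using assms(3,4) by (intro mult_left_mono power_mono) auto
  finally have "qn w \<le> r\<^sup>2 * (\<kappa>\<^sup>2 * R\<^sup>2)" .
  moreover have "\<bar>qre (qcnj p * w)\<bar> \<le> R * (\<kappa> * r\<^sup>2)"
    using qre_qcnj_mult_bound[of p w] assms(1,2) qnorm_nonneg[of p] qnorm_nonneg[of w]
    by (meson mult_mono order_trans)
  ultimately show ?thesis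
    by (simp add: algebra_simps)
qed

lemma point_under_hemisphere:
  fixes A Dl r :: real and p :: quat
  assumes "qn p + r\<^sup>2 = \<bar>Dl\<bar> / A\<^sup>2" "\<bar>A\<bar> \<ge> 1"
  defines "R \<equiv> sqrt \<bar>Dl\<bar> / \<bar>A\<bar>"
  shows "qnorm p \<le> R" "r \<le> R" "R \<le> sqrt \<bar>Dl\<bar>" "R\<^sup>2 = \<bar>Dl\<bar> / A\<^sup>2"
proof -
  show R2: "R\<^sup>2 = \<bar>Dl\<bar> / A\<^sup>2"
    by (simp add: R_def power_divide)
  show "R \<le> sqrt \<bar>Dl\<bar>"
    using assms(2) by (simp add: R_def divide_le_eq mult_le_cancel_left1)
  have "R \<ge> 0" "qn p \<le> R\<^sup>2" "r\<^sup>2 \<le> R\<^sup>2"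
    using assms(1) R2 qn_nonneg[of p] zero_le_power2[of r] by (simp add: R_def, linarith+)
  then show "qnorm p \<le> R" "r \<le> R"
    using qnorm_le_sqrt[of p "R\<^sup>2"] power2_le_imp_le[of r R] by simp_all
qed

lemma vanishing_value_radius_bound:
  fixes r \<kappa> R :: real
  assumes "r > 0" "\<kappa> > 0" "R \<ge> 0" "r\<^sup>2 \<le> r\<^sup>2 * (\<kappa>\<^sup>2 * R\<^sup>2 + 2 * \<kappa> * R)"
  shows "1 \<le> 3 * (\<kappa> * R)"
proof (cases "\<kappa> * R \<le> 1")
  case True
  have "1 \<le> (\<kappa> * R)\<^sup>2 + 2 * (\<kappa> * R)"
    using assms(1,4) by (simp add: power_mult_distrib)
  moreover have "(\<kappa> * R)\<^sup>2 \<le> \<kappa> * R"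
    using True assms(2,3) by (simp add: power2_eq_square mult_left_le_one_le)
  ultimately show ?thesis
    by linarith
qed simp

lemma nonzero_value_leading_coeff_bound:
  fixes Dd A u K :: real
  assumes "Dd \<ge> 1" "Dd * (A * u) \<in> \<int>" "A * u \<noteq> 0" "\<bar>u\<bar> \<le> K / A\<^sup>2"
  shows "\<bar>A\<bar> \<le> Dd * K"
proof -
  have "1 \<le> Dd * (\<bar>A\<bar> * \<bar>u\<bar>)"
    using Ints_nonzero_abs_ge1[OF assms(2)] assms(1,3) by (simp add: abs_mult)
  also have "\<dots> \<le> Dd * (\<bar>A\<bar> * (K / A\<^sup>2))"
    using assms(1,4) by (intro mult_left_mono) simp_all
  also have "\<dots> = Dd * K / \<bar>A\<bar>"
    using assms(3) by (simp add: power2_eq_square divide_simps)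
  finally show ?thesis
    using assms(3) by (simp add: pos_le_divide_eq)
qed

lemma leading_coeff_bound_near_cusp:
  fixes A C Dl Dd r \<kappa> :: real and b s z :: quat
  assumes "\<bar>A\<bar> \<ge> 1" "Dl \<noteq> 0" "qn b - A * C = Dl" "r > 0"
    and point: "qn (z + (1 / A) *\<^sub>R b) + r\<^sup>2 = \<bar>Dl\<bar> / A\<^sup>2"
    and definite: "Dl < 0 \<Longrightarrow> z + (1 / A) *\<^sub>R b = 0"
    and cusp: "qnorm (z - s) \<le> \<kappa> * r\<^sup>2" and "\<kappa> > 0"
    and "Dd \<ge> 1" and denominator: "Dd * form_eval (A, b, C) s 1 \<in> \<int>"
  shows "\<bar>A\<bar> \<le> Dd * \<bar>Dl\<bar> * (\<kappa> * sqrt \<bar>Dl\<bar> + 1)\<^sup>2 + 3 * \<kappa> * sqrt \<bar>Dl\<bar>"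
proof -
  define p w where "p = z + (1 / A) *\<^sub>R b" and "w = z - s"
  define d where "d = qre (qcnj p * w)"
  define u where "u = qn w - 2 * d - sgn Dl * r\<^sup>2"
  define R where "R = sqrt \<bar>Dl\<bar> / \<bar>A\<bar>"
  have "A \<noteq> 0" "R \<ge> 0"
    using \<open>\<bar>A\<bar> \<ge> 1\<close> by (auto simp: R_def)
  have "qnorm p \<le> R" "r \<le> R" "R \<le> sqrt \<bar>Dl\<bar>" and R2: "R\<^sup>2 = \<bar>Dl\<bar> / A\<^sup>2"
    using point_under_hemisphere[OF point[folded p_def] \<open>\<bar>A\<bar> \<ge> 1\<close>] by (simp_all add: R_def)
  then have estimate: "qn w + 2 * \<bar>d\<bar> \<le> r\<^sup>2 * (\<kappa>\<^sup>2 * R\<^sup>2 + 2 * \<kappa> * R)"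
    unfolding d_def using cusp \<open>r > 0\<close> \<open>\<kappa> > 0\<close>
    by (intro cusp_distance_estimate) (simp_all add: w_def)
  have eval_eq: "form_eval (A, b, C) s 1 = A * u"
    unfolding u_def d_def p_def w_def using \<open>A \<noteq> 0\<close> assms(2,3) point definite
    by (rule form_value_near_point)
  have "0 \<le> Dd * \<bar>Dl\<bar> * (\<kappa> * sqrt \<bar>Dl\<bar> + 1)\<^sup>2" "0 \<le> 3 * \<kappa> * sqrt \<bar>Dl\<bar>"
    using \<open>Dd \<ge> 1\<close> \<open>\<kappa> > 0\<close> by simp_all
  moreover consider "u = 0" "Dl > 0" | "u \<noteq> 0"
    using \<open>Dl \<noteq> 0\<close> definite qn_nonneg[of w] \<open>r > 0\<close>
    by (cases "u = 0"; cases "Dl > 0") (auto simp: u_def d_def p_def add_nonneg_eq_0_iff)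
  then have "\<bar>A\<bar> \<le> 3 * \<kappa> * sqrt \<bar>Dl\<bar> \<or> \<bar>A\<bar> \<le> Dd * \<bar>Dl\<bar> * (\<kappa> * sqrt \<bar>Dl\<bar> + 1)\<^sup>2"
  proof cases
    case 1
    then have "r\<^sup>2 \<le> r\<^sup>2 * (\<kappa>\<^sup>2 * R\<^sup>2 + 2 * \<kappa> * R)"
      using estimate abs_ge_minus_self[of d] by (simp add: u_def)
    then have "1 \<le> 3 * \<kappa> * sqrt \<bar>Dl\<bar> / \<bar>A\<bar>"
      using vanishing_value_radius_bound[OF \<open>r > 0\<close> \<open>\<kappa> > 0\<close> \<open>R \<ge> 0\<close>] by (simp add: R_def)
    then show ?thesis
      using \<open>A \<noteq> 0\<close> by (simp add: pos_le_divide_eq)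
  next
    case 2
    have "\<bar>u\<bar> \<le> qn w + 2 * \<bar>d\<bar> + r\<^sup>2"
      using \<open>Dl \<noteq> 0\<close> qn_nonneg[of w] abs_ge_self[of d] abs_ge_minus_self[of d] zero_le_power2[of r]
      by (cases "Dl > 0"; simp add: u_def abs_le_iff; linarith)
    also have "\<dots> \<le> r\<^sup>2 * (\<kappa> * R + 1)\<^sup>2"
      using estimate by (simp add: power2_eq_square algebra_simps)
    also have "\<dots> \<le> R\<^sup>2 * (\<kappa> * sqrt \<bar>Dl\<bar> + 1)\<^sup>2"
      using \<open>r \<le> R\<close> \<open>r > 0\<close> \<open>R \<le> sqrt \<bar>Dl\<bar>\<close> \<open>R \<ge> 0\<close> \<open>\<kappa> > 0\<close>
      by (intro mult_mono power_mono add_right_mono mult_left_mono) auto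
    finally have "\<bar>u\<bar> \<le> \<bar>Dl\<bar> * (\<kappa> * sqrt \<bar>Dl\<bar> + 1)\<^sup>2 / A\<^sup>2"
      by (simp add: R2)
    with \<open>Dd \<ge> 1\<close> show ?thesis
      using denominator eval_eq 2 \<open>A \<noteq> 0\<close> nonzero_value_leading_coeff_bound by (simp add: mult.assoc)
  qed
  ultimately show ?thesis
    by linarith
qed

lemma weak_fundamental_domainE:
  assumes "weak_fundamental_domain \<Gamma> F"
  obtains K \<kappa> \<epsilon> Z E where "qcompact K" "F \<subseteq> K \<times> {0<..}" "\<kappa> > 0" "\<epsilon> > 0" "finite Z"
    "\<forall>s\<in>Z. parabolic_fixed_point \<Gamma> (Some s)"
    "F = {(z, r) \<in> F. r \<ge> \<epsilon>} \<union> (\<Union>s\<in>Z. E s)"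
    "\<forall>s\<in>Z. E s \<subseteq> {(z, r) \<in> F. qnorm (z - s) \<le> \<kappa> * r\<^sup>2}"
  using assms unfolding weak_fundamental_domain_def by (elim conjE exE) (rule that; assumption)

lemma leading_coeff_bound_far:
  fixes A \<delta> \<epsilon> r :: real and p :: quat
  assumes "qn p + r\<^sup>2 = \<delta> / A\<^sup>2" "\<epsilon> \<le> r" "\<epsilon> > 0" "A \<noteq> 0"
  shows "\<bar>A\<bar> \<le> sqrt \<delta> / \<epsilon>"
proof -
  have "\<epsilon>\<^sup>2 \<le> \<delta> / A\<^sup>2"
    using assms(1-3) qn_nonneg[of p] power_mono[of \<epsilon> r 2] by linarith
  then have "(\<epsilon> * \<bar>A\<bar>)\<^sup>2 \<le> \<delta>"
    using \<open>A \<noteq> 0\<close> by (simp add: le_divide_eq power_mult_distrib)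
  then have "\<epsilon> * \<bar>A\<bar> \<le> sqrt \<delta>"
    using real_le_rsqrt by blast
  then show ?thesis
    using \<open>\<epsilon> > 0\<close> by (simp add: le_divide_eq mult.commute)
qed

lemma form_eval_in_Ints:
  fixes D :: int
  assumes "of_int D * qn s \<in> \<int>" "of_int D * qre (qcnj s * b) \<in> \<int>"
  shows "of_int D * form_eval (of_int a, b, of_int c) s 1 \<in> \<int>"
proof -
  have "of_int D * form_eval (of_int a, b, of_int c) s 1
      = of_int a * (of_int D * qn s) + 2 * (of_int D * qre (qcnj s * b)) + of_int (D * c)"
    by (simp add: form_eval_def qtr_def algebra_simps)
  also have "\<dots> \<in> \<int>"
    using Ints_mult[OF Ints_of_int assms(1)] Ints_mult[OF Ints_numeral assms(2)]
    by (intro Ints_add Ints_of_int)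
  finally show ?thesis .
qed

lemma reduced_form_leading_coeff_bound:
  fixes Dd :: "quat \<Rightarrow> real"
  assumes f: "(a, b, c) \<in> Qforms \<O> \<Delta>" "reduced_form F (a, b, c)"
    and "\<Delta> \<noteq> 0" "\<kappa> > 0" "\<epsilon> > 0"
    and F_eq: "F = {(z, r) \<in> F. r \<ge> \<epsilon>} \<union> (\<Union>s\<in>Z. E s)"
    and near: "\<forall>s\<in>Z. E s \<subseteq> {(z, r) \<in> F. qnorm (z - s) \<le> \<kappa> * r\<^sup>2}"
    and denominators: "\<forall>s\<in>Z. Dd s \<ge> 1 \<and> Dd s * form_eval (of_int a, b, of_int c) s 1 \<in> \<int>"
  defines "\<delta> \<equiv> \<bar>real_of_int \<Delta>\<bar>"
  shows "\<bar>of_int a\<bar> \<le> sqrt \<delta> / \<epsilon> \<or>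
    (\<exists>s\<in>Z. \<bar>of_int a\<bar> \<le> Dd s * \<delta> * (\<kappa> * sqrt \<delta> + 1)\<^sup>2 + 3 * \<kappa> * sqrt \<delta>)"
proof (cases "a = 0")
  case True
  then show ?thesis
    using \<open>\<epsilon> > 0\<close> by (simp add: \<delta>_def)
next
  case False
  have disc: "qn b - of_int a * of_int c = of_int \<Delta>"
    using f(1) by (simp add: Qforms_def form_disc_def)
  obtain z r where "(z, r) \<in> F" "r > 0"
    and point: "qn (z + (1 / of_int a) *\<^sub>R b) + r\<^sup>2 = \<delta> / (of_int a)\<^sup>2"
    and definite: "\<Delta> < 0 \<Longrightarrow> z + (1 / of_int a) *\<^sub>R b = 0"
    using reduced_form_point[OF disc f(2) False] unfolding \<delta>_def by metis
  from \<open>(z, r) \<in> F\<close> F_eq consider "r \<ge> \<epsilon>" | s where "s \<in> Z" "(z, r) \<in> E s"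
    by blast
  then show ?thesis
  proof cases
    case 1
    then show ?thesis
      using point \<open>\<epsilon> > 0\<close> False leading_coeff_bound_far by auto
  next
    case (2 s)
    have "\<bar>of_int a\<bar> \<le> Dd s * \<delta> * (\<kappa> * sqrt \<delta> + 1)\<^sup>2 + 3 * \<kappa> * sqrt \<delta>"
      unfolding \<delta>_def
    proof (rule leading_coeff_bound_near_cusp)
      show "qnorm (z - s) \<le> \<kappa> * r\<^sup>2"
        using near 2 by blast
    qed (use False \<open>r > 0\<close> \<open>\<kappa> > 0\<close> \<open>\<Delta> \<noteq> 0\<close> disc point definite denominators 2 in
        \<open>auto simp: \<delta>_def\<close>)
    then show ?thesis
      using 2 by blast
  qed
qed

context rational_quat_algebra
begin

lemma parabolic_fixed_point_denominator:
  assumes "quat_order A \<O>" "parabolic_fixed_point (SL2 \<O>) (Some s)"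
  shows "\<exists>D :: int. D > 0 \<and>
    (\<forall>a b c. b \<in> \<O> \<longrightarrow> of_int D * form_eval (of_int a, b, of_int c) s 1 \<in> \<int>)"
proof -
  have "s \<in> A"
    using quat_order_subset_A[OF assms(1)] assms(2) by (rule parabolic_fixed_point_in_A)
  with assms(1) obtain D where "D > 0" "of_int D * qn s \<in> \<int>"
    "\<forall>b\<in>\<O>. of_int D * qre (qcnj s * b) \<in> \<int>"
    by (rule quat_order_denominator)
  then show ?thesis
    using form_eval_in_Ints by blast
qed

lemma reduced_form_leading_coeff_bounded:
  assumes "quat_order A \<O>" "weak_fundamental_domain (SL2 \<O>) F" "\<Delta> \<noteq> 0"
  obtains M :: real where
    "\<forall>a b c. (a, b, c) \<in> Qforms \<O> \<Delta> \<and> reduced_form F (a, b, c) \<longrightarrow> \<bar>of_int a\<bar> \<le> M"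
proof -
  obtain K \<kappa> \<epsilon> Z E where "\<kappa> > 0" "\<epsilon> > 0" "finite Z"
    and cusps: "\<forall>s\<in>Z. parabolic_fixed_point (SL2 \<O>) (Some s)"
    and F_eq: "F = {(z, r) \<in> F. r \<ge> \<epsilon>} \<union> (\<Union>s\<in>Z. E s)"
    and near: "\<forall>s\<in>Z. E s \<subseteq> {(z, r) \<in> F. qnorm (z - s) \<le> \<kappa> * r\<^sup>2}"
    using assms(2) by (rule weak_fundamental_domainE)
  have "\<forall>s\<in>Z. \<exists>D. D > 0 \<and>
      (\<forall>a b c. b \<in> \<O> \<longrightarrow> of_int D * form_eval (of_int a, b, of_int c) s 1 \<in> \<int>)"
    using parabolic_fixed_point_denominator[OF assms(1)] cusps by simp
  then obtain Dd where Dd: "\<forall>s\<in>Z. Dd s > 0 \<and>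
      (\<forall>a b c. b \<in> \<O> \<longrightarrow> of_int (Dd s) * form_eval (of_int a, b, of_int c) s 1 \<in> \<int>)"
    by (rule bchoice[THEN exE])
  define \<delta> where "\<delta> = \<bar>real_of_int \<Delta>\<bar>"
  define cusp_bound where
    "cusp_bound s = of_int (Dd s) * \<delta> * (\<kappa> * sqrt \<delta> + 1)\<^sup>2 + 3 * \<kappa> * sqrt \<delta>" for s
  have cusp_bound_nonneg: "0 \<le> cusp_bound s" if "s \<in> Z" for s
    using Dd that \<open>\<kappa> > 0\<close> by (simp add: cusp_bound_def \<delta>_def less_imp_le)
  have "0 \<le> sqrt \<delta> / \<epsilon>"
    using \<open>\<epsilon> > 0\<close> by (simp add: \<delta>_def)
  show ?thesis
  proof (rule that, intro allI impI, elim conjE)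
    fix a b c
    assume f: "(a, b, c) \<in> Qforms \<O> \<Delta>" "reduced_form F (a, b, c)"
    then have "b \<in> \<O>"
      by (simp add: Qforms_def)
    with Dd have "\<forall>s\<in>Z. real_of_int (Dd s) \<ge> 1 \<and>
        real_of_int (Dd s) * form_eval (of_int a, b, of_int c) s 1 \<in> \<int>"
      by auto
    then have "\<bar>of_int a\<bar> \<le> sqrt \<delta> / \<epsilon> \<or> (\<exists>s\<in>Z. \<bar>of_int a\<bar> \<le> cusp_bound s)"
      unfolding cusp_bound_def \<delta>_def
      by (rule reduced_form_leading_coeff_bound[OF f assms(3) \<open>\<kappa> > 0\<close> \<open>\<epsilon> > 0\<close> F_eq near])
    moreover have "cusp_bound s \<le> (\<Sum>s\<in>Z. cusp_bound s)" if "s \<in> Z" for s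
      using that \<open>finite Z\<close> cusp_bound_nonneg by (intro member_le_sum) auto
    ultimately show "\<bar>of_int a\<bar> \<le> sqrt \<delta> / \<epsilon> + (\<Sum>s\<in>Z. cusp_bound s)"
      using \<open>0 \<le> sqrt \<delta> / \<epsilon>\<close> sum_nonneg[of Z cusp_bound] cusp_bound_nonneg by fastforce
  qed
qed

end

lemma weak_fundamental_domain_bounded:
  assumes "weak_fundamental_domain \<Gamma> F"
  obtains B where "B \<ge> 0" "\<forall>(z, r) \<in> F. qnorm z \<le> B"
proof -
  obtain K \<kappa> \<epsilon> Z E where "qcompact K" "F \<subseteq> K \<times> {0<..}"
    using assms by (rule weak_fundamental_domainE)
  from \<open>qcompact K\<close> have "bounded (quat_vec ` K)"
    unfolding qcompact_def by (rule compact_imp_bounded)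
  then obtain B where "\<forall>z\<in>K. norm (quat_vec z) \<le> B"
    by (auto simp: bounded_iff)
  with \<open>F \<subseteq> K \<times> {0<..}\<close> have "\<forall>(z, r) \<in> F. qnorm z \<le> max B 0"
    by (force simp: qnorm_eq_norm le_max_iff_disj)
  then show ?thesis
    using that[of "max B 0"] by simp
qed

lemma reduced_form_middle_coeff_bound:
  assumes "(a, b, c) \<in> Qforms \<O> \<Delta>" "reduced_form F (a, b, c)" "\<forall>(z, r) \<in> F. qnorm z \<le> B"
  shows "qnorm b \<le> sqrt \<bar>of_int \<Delta>\<bar> + \<bar>of_int a\<bar> * B"
proof (cases "a = 0")
  case True
  then have "qn b = of_int \<Delta>"
    using assms(1) by (simp add: Qforms_def form_disc_def)
  then show ?thesis
    using True qn_nonneg[of b] by (simp add: qnorm_def)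
next
  case False
  define a' where "a' = real_of_int a"
  have "a' \<noteq> 0"
    using False by (simp add: a'_def)
  have disc: "qn b - of_int a * of_int c = of_int \<Delta>"
    using assms(1) by (simp add: Qforms_def form_disc_def)
  obtain z r where "(z, r) \<in> F"
    and point: "qn (z + (1 / a') *\<^sub>R b) + r\<^sup>2 = \<bar>of_int \<Delta>\<bar> / a'\<^sup>2"
    using reduced_form_point[OF disc assms(2) False] unfolding a'_def by metis
  have "qn (z + (1 / a') *\<^sub>R b) \<le> \<bar>of_int \<Delta>\<bar> / a'\<^sup>2"
    using point zero_le_power2[of r] by linarith
  then have near: "qnorm (z + (1 / a') *\<^sub>R b) \<le> sqrt \<bar>of_int \<Delta>\<bar> / \<bar>a'\<bar>"
    using qnorm_le_sqrt by (fastforce simp: real_sqrt_divide)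
  have "b = a' *\<^sub>R ((z + (1 / a') *\<^sub>R b) - z)"
    using \<open>a' \<noteq> 0\<close> by (simp add: algebra_simps)
  then have "qnorm b \<le> \<bar>a'\<bar> * (qnorm (z + (1 / a') *\<^sub>R b) + qnorm z)"
    using qnorm_triangle[of "z + (1 / a') *\<^sub>R b" "- z"]
    by (metis abs_ge_zero diff_conv_add_uminus mult_left_mono qnorm_scaleR qn_uminus qnorm_def)
  also have "\<dots> \<le> \<bar>a'\<bar> * (sqrt \<bar>of_int \<Delta>\<bar> / \<bar>a'\<bar> + B)"
    using near assms(3) \<open>(z, r) \<in> F\<close> by (intro mult_left_mono add_mono) auto
  finally show ?thesis
    using \<open>a' \<noteq> 0\<close> by (simp add: a'_def algebra_simps)
qed

lemma reduced_form_last_coeff_bound: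
  assumes "(a, b, c) \<in> Qforms \<O> \<Delta>" "reduced_form F (a, b, c)" "\<forall>(z, r) \<in> F. qnorm z \<le> B"
    and "B \<ge> 0"
  shows "\<bar>of_int c\<bar> \<le> qn b + \<bar>of_int \<Delta>\<bar> + 2 * B * sqrt \<bar>of_int \<Delta>\<bar>"
proof (cases "a = 0")
  case True
  then have "qn b = of_int \<Delta>"
    using assms(1) by (simp add: Qforms_def form_disc_def)
  from True assms(2) obtain z r where "(z, r) \<in> F"
    and "2 * qre (qcnj z * b) + of_int c = 0"
    by (auto simp: reduced_form_def form_C_def form_eval_def qtr_def)
  then have "\<bar>of_int c\<bar> \<le> 2 * (qnorm z * qnorm b)"
    using qre_qcnj_mult_bound[of z b] by linarith
  also have "\<dots> \<le> 2 * (B * sqrt \<bar>of_int \<Delta>\<bar>)"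
    using assms(3) \<open>(z, r) \<in> F\<close> \<open>B \<ge> 0\<close> \<open>qn b = of_int \<Delta>\<close> qnorm_nonneg[of z] qn_nonneg[of b]
    by (intro mult_left_mono mult_mono) (auto simp: qnorm_def)
  finally show ?thesis
    using qn_nonneg[of b] by simp
next
  case False
  have "(1 :: real) \<le> \<bar>of_int a\<bar>"
    using False by (simp flip: of_int_abs)
  then have "\<bar>of_int c\<bar> \<le> \<bar>of_int a\<bar> * \<bar>(of_int c :: real)\<bar>"
    using mult_right_mono[of 1 "\<bar>of_int a\<bar>" "\<bar>(of_int c :: real)\<bar>"] by simp
  also have "\<dots> = \<bar>qn b - of_int \<Delta>\<bar>"
    using assms(1) by (auto simp: Qforms_def form_disc_def abs_mult[symmetric])
  also have "\<dots> \<le> qn b + \<bar>of_int \<Delta>\<bar>"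
    using qn_nonneg[of b] by simp
  finally show ?thesis
    using \<open>B \<ge> 0\<close> by (smt (verit) mult_nonneg_nonneg real_sqrt_ge_zero abs_ge_zero)
qed

lemma reduced_form_coeffs_bound:
  assumes "(a, b, c) \<in> Qforms \<O> \<Delta>" "reduced_form F (a, b, c)" "\<forall>(z, r) \<in> F. qnorm z \<le> B"
    and "B \<ge> 0" "\<bar>of_int a\<bar> \<le> M"
  defines "Mb \<equiv> (sqrt \<bar>of_int \<Delta>\<bar> + M * B)\<^sup>2"
  shows "qn b \<le> Mb" "\<bar>of_int c\<bar> \<le> Mb + \<bar>of_int \<Delta>\<bar> + 2 * B * sqrt \<bar>of_int \<Delta>\<bar>"
proof -
  have "qnorm b \<le> sqrt \<bar>of_int \<Delta>\<bar> + M * B"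
    using reduced_form_middle_coeff_bound[OF assms(1-3)] mult_right_mono[OF assms(5,4)]
    by linarith
  then show "qn b \<le> Mb"
    unfolding Mb_def qnorm_power2[symmetric] using qnorm_nonneg by (rule power_mono)
  then show "\<bar>of_int c\<bar> \<le> Mb + \<bar>of_int \<Delta>\<bar> + 2 * B * sqrt \<bar>of_int \<Delta>\<bar>"
    using reduced_form_last_coeff_bound[OF assms(1-4)] by linarith
qed

context rational_quat_algebra
begin

lemma finite_Qforms_bounded:
  assumes "quat_order A \<O>"
  shows "finite {(a, b, c) \<in> Qforms \<O> \<Delta>. \<bar>of_int a\<bar> \<le> M \<and> qn b \<le> M \<and> \<bar>of_int c\<bar> \<le> M}"
proof -
  obtain N where "N > 0" "\<O> \<subseteq> lattice N"
    using assms by (rule quat_order_subset_lattice)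
  have "{(a, b, c) \<in> Qforms \<O> \<Delta>. \<bar>of_int a\<bar> \<le> M \<and> qn b \<le> M \<and> \<bar>of_int c\<bar> \<le> M}
      \<subseteq> {-\<lceil>M\<rceil>..\<lceil>M\<rceil>} \<times> {x \<in> lattice N. qn x \<le> M} \<times> {-\<lceil>M\<rceil>..\<lceil>M\<rceil>}"
    using \<open>\<O> \<subseteq> lattice N\<close> by (auto simp: Qforms_def abs_le_iff; linarith)
  moreover have "finite ({-\<lceil>M\<rceil>..\<lceil>M\<rceil>} \<times> {x \<in> lattice N. qn x \<le> M} \<times> {-\<lceil>M\<rceil>..\<lceil>M\<rceil>})"
    using finite_lattice_qn_le[OF \<open>N > 0\<close>] by simp
  ultimately show ?thesis
    by (rule finite_subset)
qed

lemma reduced_forms_bounded: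
  assumes "quat_order A \<O>" "weak_fundamental_domain (SL2 \<O>) F" "\<Delta> \<noteq> 0"
  obtains M :: real where "{f \<in> Qforms \<O> \<Delta>. reduced_form F f}
    \<subseteq> {(a, b, c) \<in> Qforms \<O> \<Delta>. \<bar>of_int a\<bar> \<le> M \<and> qn b \<le> M \<and> \<bar>of_int c\<bar> \<le> M}"
proof -
  obtain B where "B \<ge> 0" and F_bounded: "\<forall>(z, r) \<in> F. qnorm z \<le> B"
    using assms(2) by (rule weak_fundamental_domain_bounded)
  obtain Ma :: real where
    Ma: "\<forall>a b c. (a, b, c) \<in> Qforms \<O> \<Delta> \<and> reduced_form F (a, b, c) \<longrightarrow> \<bar>of_int a\<bar> \<le> Ma"
    using assms by (rule reduced_form_leading_coeff_bounded)
  define Mb where "Mb = (sqrt \<bar>of_int \<Delta>\<bar> + Ma * B)\<^sup>2"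
  define M where "M = max Ma (Mb + \<bar>of_int \<Delta>\<bar> + 2 * B * sqrt \<bar>of_int \<Delta>\<bar>)"
  have "0 \<le> \<bar>of_int \<Delta>\<bar> + 2 * B * sqrt \<bar>of_int \<Delta>\<bar>"
    using \<open>B \<ge> 0\<close> by simp
  show ?thesis
  proof (rule that, safe)
    fix a b c
    assume f: "(a, b, c) \<in> Qforms \<O> \<Delta>" "reduced_form F (a, b, c)"
    then have "\<bar>of_int a\<bar> \<le> Ma"
      using Ma by blast
    moreover from this have "qn b \<le> Mb"
      "\<bar>of_int c\<bar> \<le> Mb + \<bar>of_int \<Delta>\<bar> + 2 * B * sqrt \<bar>of_int \<Delta>\<bar>"
      using reduced_form_coeffs_bound[OF f F_bounded \<open>B \<ge> 0\<close>] by (simp_all add: Mb_def)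
    ultimately show "\<bar>of_int a\<bar> \<le> M" "qn b \<le> M" "\<bar>of_int c\<bar> \<le> M"
      using \<open>0 \<le> \<bar>of_int \<Delta>\<bar> + 2 * B * sqrt \<bar>of_int \<Delta>\<bar>\<close> unfolding M_def by linarith+
  qed
qed
end

theorem theorem18:
  fixes A \<O> :: "quat set" and F :: "(quat \<times> real) set" and \<Delta> :: int
  assumes "definite_quat_algebra_Q A"
    and "quat_order A \<O>"
    and "weak_fundamental_domain (SL2 \<O>) F"
    and "\<Delta> \<noteq> 0"
  shows "finite {f \<in> Qforms \<O> \<Delta>. reduced_form F f}"
proof -
  obtain e where "rational_quat_algebra A e"
    using assms(1) by (rule definite_quat_algebra_Q_imp_rational_quat_algebra)
  then interpret rational_quat_algebra A e .
  obtain M where "{f \<in> Qforms \<O> \<Delta>. reduced_form F f}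
      \<subseteq> {(a, b, c) \<in> Qforms \<O> \<Delta>. \<bar>of_int a\<bar> \<le> M \<and> qn b \<le> M \<and> \<bar>of_int c\<bar> \<le> M}"
    using assms(2-4) by (rule reduced_forms_bounded)
  then show ?thesis
    using finite_Qforms_bounded[OF assms(2)] by (rule finite_subset)
qed

end
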